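(* There are universal constants $C>0$ and $M>0$ such that the following holds. Let $n\ge2$, $r\ge1$, $\rho=r/n$, and let $(\eta_t)$ be the ZRP with rate $1$ on $K_n$ with $r$ particles. Fix a vertex $v$ and suppose $\eta_0(v)\le2(\rho+1)$. Let $Z$ be the Lebesgue measure of $\{t<(\rho+1)^2:\eta_t(v)=0\}$. Then $\mathbf E(Z\wedge M(\rho+1))\ge C(\rho+1)$. *)

theory Defs
  imports "HOL-Probability.Probability"
begin

text \<open>
Zero-range process (ZRP) with constant rate 1 on the complete graph K_n,
vertices 0,...,n-1.  A configuration is a function eta :: nat => nat
(number of particles at each vertex).  Dynamics: every vertex carrying
at least one particle, independently at rate 1, sends one particle to a
uniformly chosen other vertex (neighbour in K_n).

We realise the process by the standard jump-chain / holding-time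
construction from an i.i.d. driving sequence
  omega k = (e_k, a_k, b_k),  e_k ~ Exp(1),  a_k, b_k ~ Unif(0,1).
In state eta with q = number of occupied vertices, the holding time is
e_k / q (i.e. Exp(q)), the emitting vertex is the a_k-uniform occupied
vertex and the receiving vertex is the b_k-uniform vertex different
from the emitting one.
\<close>

definition occupied :: "nat \<Rightarrow> (nat \<Rightarrow> nat) \<Rightarrow> nat set" where
  "occupied n eta = {i. i < n \<and> 0 < eta i}"

definition zrp_src :: "nat \<Rightarrow> (nat \<Rightarrow> nat) \<Rightarrow> real \<Rightarrow> nat" where
  "zrp_src n eta a =
     sorted_list_of_set (occupied n eta) ! nat \<lfloor>a * real (card (occupied n eta))\<rfloor>"

definition zrp_tgt :: "nat \<Rightarrow> nat \<Rightarrow> real \<Rightarrow> nat" where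
  "zrp_tgt n s b = sorted_list_of_set ({0..<n} - {s}) ! nat \<lfloor>b * real (n - 1)\<rfloor>"

definition zrp_step :: "nat \<Rightarrow> (nat \<Rightarrow> nat) \<Rightarrow> real \<Rightarrow> real \<Rightarrow> (nat \<Rightarrow> nat)" where
  "zrp_step n eta a b =
     (let s = zrp_src n eta a; t = zrp_tgt n s b
      in eta(s := eta s - 1, t := eta t + 1))"

definition zrp_drive :: "(real \<times> real \<times> real) measure" where
  "zrp_drive = density lborel (exponential_density 1) \<Otimes>\<^sub>M
     (uniform_measure lborel {0<..<1} \<Otimes>\<^sub>M uniform_measure lborel {0<..<1})"

definition zrp_space :: "(nat \<Rightarrow> real \<times> real \<times> real) measure" where
  "zrp_space = PiM UNIV (\<lambda>_. zrp_drive)"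

primrec zrp_chain :: "nat \<Rightarrow> (nat \<Rightarrow> nat) \<Rightarrow> (nat \<Rightarrow> real \<times> real \<times> real) \<Rightarrow> nat \<Rightarrow> (nat \<Rightarrow> nat)" where
  "zrp_chain n eta0 \<omega> 0 = eta0"
| "zrp_chain n eta0 \<omega> (Suc k) =
     zrp_step n (zrp_chain n eta0 \<omega> k) (fst (snd (\<omega> k))) (snd (snd (\<omega> k)))"

primrec zrp_jump :: "nat \<Rightarrow> (nat \<Rightarrow> nat) \<Rightarrow> (nat \<Rightarrow> real \<times> real \<times> real) \<Rightarrow> nat \<Rightarrow> real" where
  "zrp_jump n eta0 \<omega> 0 = 0"
| "zrp_jump n eta0 \<omega> (Suc k) =
     zrp_jump n eta0 \<omega> k + fst (\<omega> k) / real (card (occupied n (zrp_chain n eta0 \<omega> k)))"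

definition zrp :: "nat \<Rightarrow> (nat \<Rightarrow> nat) \<Rightarrow> real \<Rightarrow> (nat \<Rightarrow> real \<times> real \<times> real) \<Rightarrow> (nat \<Rightarrow> nat)" where
  "zrp n eta0 t \<omega> = zrp_chain n eta0 \<omega> (card {k. 1 \<le> k \<and> zrp_jump n eta0 \<omega> k \<le> t})"

end

theory Submission
  imports Defs
begin

text \<open>
  Put \<open>L = \<rho> + 1\<close> and follow the embedded jump chain together with its jump times \<open>J\<^sub>k\<close> and the
  time \<open>Z\<^sub>k\<close> that \<open>v\<close> has spent empty before \<open>min J\<^sub>k T\<close>, where \<open>T = L\<^sup>2\<close>. With
  \<open>\<lambda> = 24/L\<close>, \<open>\<mu> = 6/L\<close> and \<open>\<kappa> = 18/L\<^sup>2\<close>, the process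
  \<open>exp (\<lambda> Z\<^sub>k - \<mu> \<eta>\<^sub>k(v) - \<kappa> J\<^sub>k)\<close>, frozen once \<open>Z\<^sub>k \<ge> L/24\<close> or \<open>J\<^sub>k \<ge> T\<close>, is a
  submartingale. While \<open>v\<close> is occupied and \<open>q\<close> sites are occupied, a jump multiplies
  \<open>exp (-\<mu> \<eta>(v))\<close> on average by at least \<open>1 + (e\<^sup>\<mu> + e\<^sup>-\<^sup>\<mu> - 2)/q\<close>, which beats the factor
  \<open>q/(q + \<kappa>)\<close> lost through \<open>J\<close>. While \<open>v\<close> is empty, \<open>Z\<close> grows at the rate of \<open>J\<close>, and
  \<open>\<lambda> - \<kappa> \<ge> 1 - e\<^sup>-\<^sup>\<mu>\<close> pays for the chance \<open>\<le> 1/q\<close> that \<open>v\<close> receives the next particle.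
  Since \<open>\<mu> \<eta>\<^sub>0(v) \<le> 12\<close>, \<open>\<lambda> L/24 = 1\<close> and \<open>\<kappa> T = 18\<close>, comparing the initial value
  \<open>e\<^sup>-\<^sup>1\<^sup>2\<close> with the expectation after so many jumps that \<open>J\<^sub>k \<ge> T\<close> with high probability
  yields \<open>P(Z \<ge> L/24) \<ge> e\<^sup>-\<^sup>1\<^sup>3/2\<close>, hence \<open>E (min Z (L/24)) \<ge> e\<^sup>-\<^sup>1\<^sup>3 L/48\<close>.
\<close>

section \<open>Configurations and single jumps\<close>

definition zrp_conf :: "nat \<Rightarrow> nat \<Rightarrow> (nat \<Rightarrow> nat) \<Rightarrow> bool" where
  "zrp_conf n r eta \<longleftrightarrow> (\<forall>i. n \<le> i \<longrightarrow> eta i = 0) \<and> (\<Sum>i<n. eta i) = r"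

lemma finite_occupied [simp]: "finite (occupied n eta)"
  by (auto simp: occupied_def)

lemma card_occupied_le: "card (occupied n eta) \<le> n"
proof -
  have "occupied n eta \<subseteq> {0..<n}" by (auto simp: occupied_def)
  from card_mono[OF _ this] show ?thesis by simp
qed

lemma card_occupied_le_if_empty:
  assumes "v < n" "eta v = 0"
  shows "card (occupied n eta) \<le> n - 1"
proof -
  have "occupied n eta \<subseteq> {0..<n} - {v}" using assms by (auto simp: occupied_def)
  from card_mono[OF _ this] assms show ?thesis by simp
qed

lemma card_occupied_pos:
  assumes "zrp_conf n r eta" "1 \<le> r"
  shows "0 < card (occupied n eta)"
proof (rule ccontr)
  assume "\<not> 0 < card (occupied n eta)"
  then have "\<forall>i<n. eta i = 0" by (auto simp: occupied_def)
  with assms show False by (simp add: zrp_conf_def)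
qed

lemma nat_floor_mult_less:
  fixes a :: real
  assumes "0 \<le> a" "a < 1" "0 < q"
  shows "nat \<lfloor>a * real q\<rfloor> < q"
proof -
  have "a * real q < real q" using assms by simp
  then show ?thesis using assms by (simp add: nat_less_iff floor_less_iff)
qed

lemma zrp_src_occupied:
  assumes "zrp_conf n r eta" "1 \<le> r" "0 \<le> a" "a < 1"
  shows "zrp_src n eta a \<in> occupied n eta"
proof -
  have "nat \<lfloor>a * real (card (occupied n eta))\<rfloor> < length (sorted_list_of_set (occupied n eta))"
    using nat_floor_mult_less[OF assms(3,4) card_occupied_pos[OF assms(1,2)]] by simp
  then show ?thesis
    unfolding zrp_src_def by (metis nth_mem set_sorted_list_of_set finite_occupied)
qed

lemma zrp_tgt_in:
  assumes "s < n" "2 \<le> n" "0 \<le> b" "b < 1"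
  shows "zrp_tgt n s b \<in> {0..<n} - {s}"
proof -
  have "nat \<lfloor>b * real (n - 1)\<rfloor> < length (sorted_list_of_set ({0..<n} - {s}))"
    using nat_floor_mult_less[of b "n - 1"] assms by simp
  then show ?thesis
    unfolding zrp_tgt_def by (metis nth_mem set_sorted_list_of_set finite_Diff finite_atLeastLessThan)
qed

lemma zrp_step_moves_particle:
  assumes "zrp_conf n r eta" "1 \<le> r" "2 \<le> n" "0 \<le> a" "a < 1" "0 \<le> b" "b < 1"
  defines "s \<equiv> zrp_src n eta a" and "t \<equiv> zrp_tgt n (zrp_src n eta a) b"
  shows "s < n" "t < n" "s \<noteq> t" "0 < eta s"
    and "zrp_step n eta a b = eta(s := eta s - 1, t := eta t + 1)"
proof -
  have "s \<in> occupied n eta" unfolding s_def using zrp_src_occupied assms by blast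
  then show "s < n" "0 < eta s" by (auto simp: occupied_def)
  then have "t \<in> {0..<n} - {s}" unfolding t_def s_def using zrp_tgt_in assms by blast
  then show "t < n" "s \<noteq> t" by auto
  show "zrp_step n eta a b = eta(s := eta s - 1, t := eta t + 1)"
    unfolding zrp_step_def s_def t_def Let_def by simp
qed

lemma sum_lessThan_move_unit:
  fixes f :: "nat \<Rightarrow> nat"
  assumes "s < n" "t < n" "s \<noteq> t" "0 < f s"
  shows "(\<Sum>i<n. (f(s := f s - 1, t := f t + 1)) i) = (\<Sum>i<n. f i)"
proof -
  let ?g = "f(s := f s - 1, t := f t + 1)"
  have "int (?g i) = int (f i) + (if i = t then 1 else 0) - (if i = s then 1 else 0)" for i
    using assms by (auto simp: of_nat_diff)
  then have "int (\<Sum>i<n. ?g i)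
      = (\<Sum>i<n. int (f i)) + (\<Sum>i<n. if i = t then 1 else 0) - (\<Sum>i<n. if i = s then 1 else 0)"
    by (simp add: sum_subtractf sum.distrib)
  also have "\<dots> = int (\<Sum>i<n. f i)" using assms by simp
  finally show ?thesis by linarith
qed

lemma zrp_conf_step:
  assumes "zrp_conf n r eta" "1 \<le> r" "2 \<le> n" "0 \<le> a" "a < 1" "0 \<le> b" "b < 1"
  shows "zrp_conf n r (zrp_step n eta a b)"
  using zrp_step_moves_particle[OF assms] assms(1) sum_lessThan_move_unit[of _ n _ eta]
  unfolding zrp_conf_def by auto

lemma zrp_step_at:
  assumes "zrp_conf n r eta" "1 \<le> r" "2 \<le> n" "0 \<le> a" "a < 1" "0 \<le> b" "b < 1"
  shows "zrp_step n eta a b v =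
    (if zrp_src n eta a = v then eta v - 1
     else if zrp_tgt n (zrp_src n eta a) b = v then eta v + 1 else eta v)"
  using zrp_step_moves_particle[OF assms] by auto

section \<open>The jump chain with its jump times and the time spent at zero\<close>

text \<open>A state \<open>(\<eta>, J, Z)\<close>: the configuration, the time \<open>J\<close> of the last jump, and the time
  \<open>Z\<close> during which \<open>v\<close> was empty before \<open>min J T\<close>.\<close>

type_synonym zstate = "(nat \<Rightarrow> nat) \<times> real \<times> real"

definition zstep :: "nat \<Rightarrow> nat \<Rightarrow> real \<Rightarrow> zstate \<Rightarrow> real \<times> real \<times> real \<Rightarrow> zstate" where
  "zstep n v T s w =
     (let eta = fst s; J = fst (snd s); Z = snd (snd s);
          J' = J + fst w / real (card (occupied n eta))
      in (zrp_step n eta (fst (snd w)) (snd (snd w)), J',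
          Z + (if eta v = 0 then max 0 (min J' T - J) else 0)))"

text \<open>The recursion consumes the first driving variable and shifts the rest, which matches
  the decomposition of \<^const>\<open>zrp_space\<close> used in \<open>nn_integral_zrp_space_split\<close>.\<close>

primrec zchain :: "nat \<Rightarrow> nat \<Rightarrow> real \<Rightarrow> zstate \<Rightarrow> (nat \<Rightarrow> real \<times> real \<times> real) \<Rightarrow> nat \<Rightarrow> zstate"
where
  "zchain n v T s \<omega> 0 = s"
| "zchain n v T s \<omega> (Suc k) = zchain n v T (zstep n v T s (\<omega> 0)) (\<lambda>j. \<omega> (Suc j)) k"

lemma zstep_eq:
  "zstep n v T (eta, J, Z) w =
    (zrp_step n eta (fst (snd w)) (snd (snd w)),
     J + fst w / real (card (occupied n eta)),
     Z + (if eta v = 0 then max 0 (min (J + fst w / real (card (occupied n eta))) T - J) else 0))"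
  by (simp add: zstep_def Let_def)

lemma zchain_Suc: "zchain n v T s \<omega> (Suc k) = zstep n v T (zchain n v T s \<omega> k) (\<omega> k)"
proof (induction k arbitrary: s \<omega>)
  case (Suc k)
  then show ?case by (metis zchain.simps(2))
qed simp

lemma zchain_zrp:
  "fst (zchain n v T (eta0, 0, Z0) \<omega> k) = zrp_chain n eta0 \<omega> k"
  "fst (snd (zchain n v T (eta0, 0, Z0) \<omega> k)) = zrp_jump n eta0 \<omega> k"
proof -
  have "fst (zchain n v T (eta0, 0, Z0) \<omega> k) = zrp_chain n eta0 \<omega> k \<and>
    fst (snd (zchain n v T (eta0, 0, Z0) \<omega> k)) = zrp_jump n eta0 \<omega> k"
    by (induction k) (auto simp del: zchain.simps(2) simp: zchain_Suc zstep_def Let_def)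
  then show "fst (zchain n v T (eta0, 0, Z0) \<omega> k) = zrp_chain n eta0 \<omega> k"
    "fst (snd (zchain n v T (eta0, 0, Z0) \<omega> k)) = zrp_jump n eta0 \<omega> k" by auto
qed

section \<open>Measurability of the chain\<close>

text \<open>Configurations carry no measurable structure; instead we use that after \<open>k\<close> jumps
  the configuration ranges over a countable set, on which we take the counting measure.\<close>

definition zrp_step_idx :: "nat \<Rightarrow> (nat \<Rightarrow> nat) \<Rightarrow> nat \<Rightarrow> nat \<Rightarrow> (nat \<Rightarrow> nat)" where
  "zrp_step_idx n eta i j =
     (let s = sorted_list_of_set (occupied n eta) ! i;
          t = sorted_list_of_set ({0..<n} - {s}) ! j
      in eta(s := eta s - 1, t := eta t + 1))"

lemma zrp_step_eq_idx:
  "zrp_step n eta a b =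
    zrp_step_idx n eta (nat \<lfloor>a * real (card (occupied n eta))\<rfloor>) (nat \<lfloor>b * real (n - 1)\<rfloor>)"
  by (simp add: zrp_step_def zrp_src_def zrp_tgt_def zrp_step_idx_def Let_def)

primrec reachable :: "nat \<Rightarrow> (nat \<Rightarrow> nat) \<Rightarrow> nat \<Rightarrow> (nat \<Rightarrow> nat) set" where
  "reachable n e 0 = {e}"
| "reachable n e (Suc k) = (\<lambda>(eta, i, j). zrp_step_idx n eta i j) ` (reachable n e k \<times> UNIV \<times> UNIV)"

lemma countable_reachable: "countable (reachable n e k)"
  by (induction k) auto

lemma sets_zrp_drive: "sets zrp_drive = sets (borel \<Otimes>\<^sub>M borel \<Otimes>\<^sub>M (borel :: real measure))"
  unfolding zrp_drive_def by (intro sets_pair_measure_cong) auto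

lemma measurable_zrp_space_nth [measurable]:
  "(\<lambda>\<omega>. \<omega> k) \<in> zrp_space \<rightarrow>\<^sub>M (borel \<Otimes>\<^sub>M borel \<Otimes>\<^sub>M (borel :: real measure))"
proof -
  have "(\<lambda>\<omega>. \<omega> k) \<in> zrp_space \<rightarrow>\<^sub>M zrp_drive"
    unfolding zrp_space_def by (rule measurable_component_singleton) simp
  then show ?thesis using measurable_cong_sets[OF refl sets_zrp_drive] by blast
qed

lemma measurable_zrp_space_components [measurable]:
  "(\<lambda>\<omega>. fst (\<omega> k)) \<in> borel_measurable zrp_space"
  "(\<lambda>\<omega>. fst (snd (\<omega> k))) \<in> borel_measurable zrp_space"
  "(\<lambda>\<omega>. snd (snd (\<omega> k))) \<in> borel_measurable zrp_space"
  by measurable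

lemma measurable_zrp_space_index:
  "(\<lambda>\<omega>. nat \<lfloor>fst (snd (\<omega> k)) * c\<rfloor>) \<in> zrp_space \<rightarrow>\<^sub>M count_space UNIV"
  "(\<lambda>\<omega>. nat \<lfloor>snd (snd (\<omega> k)) * c\<rfloor>) \<in> zrp_space \<rightarrow>\<^sub>M count_space UNIV"
proof -
  have floor: "(\<lambda>x::real. nat \<lfloor>x\<rfloor>) \<in> borel \<rightarrow>\<^sub>M count_space UNIV" by measurable
  show "(\<lambda>\<omega>. nat \<lfloor>fst (snd (\<omega> k)) * c\<rfloor>) \<in> zrp_space \<rightarrow>\<^sub>M count_space UNIV"
    "(\<lambda>\<omega>. nat \<lfloor>snd (snd (\<omega> k)) * c\<rfloor>) \<in> zrp_space \<rightarrow>\<^sub>M count_space UNIV"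
    by (rule measurable_compose[OF _ floor], measurable)+
qed

lemma measurable_zrp_step_idx:
  assumes "e \<in> reachable n e0 k"
  shows "(\<lambda>\<omega>. zrp_step_idx n e (nat \<lfloor>fst (snd (\<omega> k)) * real (card (occupied n e))\<rfloor>)
           (nat \<lfloor>snd (snd (\<omega> k)) * real (n - 1)\<rfloor>))
         \<in> zrp_space \<rightarrow>\<^sub>M count_space (reachable n e0 (Suc k))"
proof (rule measurable_compose_countable'[where I = UNIV and
    g = "\<lambda>\<omega>. nat \<lfloor>fst (snd (\<omega> k)) * real (card (occupied n e))\<rfloor>"])
  fix i :: nat
  show "(\<lambda>\<omega>. zrp_step_idx n e i (nat \<lfloor>snd (snd (\<omega> k)) * real (n - 1)\<rfloor>))
      \<in> zrp_space \<rightarrow>\<^sub>M count_space (reachable n e0 (Suc k))"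
  proof (rule measurable_compose_countable'[where I = UNIV and
      g = "\<lambda>\<omega>. nat \<lfloor>snd (snd (\<omega> k)) * real (n - 1)\<rfloor>"])
    fix j :: nat
    show "(\<lambda>\<omega>. zrp_step_idx n e i j) \<in> zrp_space \<rightarrow>\<^sub>M count_space (reachable n e0 (Suc k))"
      using assms by (intro measurable_const) (auto intro: image_eqI[where x = "(e, i, j)"])
  qed (rule measurable_zrp_space_index, simp)
qed (rule measurable_zrp_space_index, simp)

lemma measurable_zchain:
  "(\<lambda>\<omega>. fst (zchain n v T s \<omega> k)) \<in> zrp_space \<rightarrow>\<^sub>M count_space (reachable n (fst s) k) \<and>
   (\<lambda>\<omega>. fst (snd (zchain n v T s \<omega> k))) \<in> borel_measurable zrp_space \<and>
   (\<lambda>\<omega>. snd (snd (zchain n v T s \<omega> k))) \<in> borel_measurable zrp_space"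
proof (induction k)
  case 0
  then show ?case by (auto intro!: measurable_const)
next
  case (Suc k)
  let ?E = "\<lambda>\<omega>. fst (zchain n v T s \<omega> k)"
  let ?J = "\<lambda>\<omega>. fst (snd (zchain n v T s \<omega> k))"
  let ?Z = "\<lambda>\<omega>. snd (snd (zchain n v T s \<omega> k))"
  have E: "?E \<in> zrp_space \<rightarrow>\<^sub>M count_space (reachable n (fst s) k)"
    and J [measurable]: "?J \<in> borel_measurable zrp_space"
    and Z [measurable]: "?Z \<in> borel_measurable zrp_space" using Suc by auto
  let ?J' = "\<lambda>e \<omega>. ?J \<omega> + fst (\<omega> k) / real (card (occupied n e))"
  have "(\<lambda>\<omega>. (\<lambda>e \<omega>. zrp_step_idx n e (nat \<lfloor>fst (snd (\<omega> k)) * real (card (occupied n e))\<rfloor>)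
        (nat \<lfloor>snd (snd (\<omega> k)) * real (n - 1)\<rfloor>)) (?E \<omega>) \<omega>)
      \<in> zrp_space \<rightarrow>\<^sub>M count_space (reachable n (fst s) (Suc k))"
    by (rule measurable_compose_countable'[OF _ E countable_reachable], rule measurable_zrp_step_idx)
  moreover have "(\<lambda>\<omega>. ?J' (?E \<omega>) \<omega>) \<in> borel_measurable zrp_space"
    by (rule measurable_compose_countable'[where f = ?J', OF _ E countable_reachable]) measurable
  moreover have "(\<lambda>\<omega>. (\<lambda>e \<omega>. ?Z \<omega> + (if e v = 0 then max 0 (min (?J' e \<omega>) T - ?J \<omega>) else 0))
      (?E \<omega>) \<omega>) \<in> borel_measurable zrp_space"
    by (rule measurable_compose_countable'[OF _ E countable_reachable]) measurable
  ultimately show ?case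
    by (simp del: zchain.simps(2) add: zchain_Suc zstep_def Let_def zrp_step_eq_idx)
qed

lemma measurable_zchain_fun:
  fixes G :: "zstate \<Rightarrow> ennreal"
  assumes "\<And>e. (\<lambda>x. G (e, x)) \<in> borel_measurable borel"
  shows "(\<lambda>\<omega>. G (zchain n v T s \<omega> k)) \<in> borel_measurable zrp_space"
proof -
  have E: "(\<lambda>\<omega>. fst (zchain n v T s \<omega> k)) \<in> zrp_space \<rightarrow>\<^sub>M count_space (reachable n (fst s) k)"
    and [measurable]: "(\<lambda>\<omega>. fst (snd (zchain n v T s \<omega> k))) \<in> borel_measurable zrp_space"
    and [measurable]: "(\<lambda>\<omega>. snd (snd (zchain n v T s \<omega> k))) \<in> borel_measurable zrp_space"
    using measurable_zchain by blast+
  have "(\<lambda>\<omega>. (\<lambda>e \<omega>. G (e, snd (zchain n v T s \<omega> k))) (fst (zchain n v T s \<omega> k)) \<omega>)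
      \<in> borel_measurable zrp_space"
  proof (rule measurable_compose_countable'[OF _ E countable_reachable])
    fix e
    have "(\<lambda>\<omega>. (fst (snd (zchain n v T s \<omega> k)), snd (snd (zchain n v T s \<omega> k))))
        \<in> zrp_space \<rightarrow>\<^sub>M borel"
      unfolding borel_prod[symmetric] by measurable
    from measurable_compose[OF this assms[of e]]
    show "(\<lambda>\<omega>. G (e, snd (zchain n v T s \<omega> k))) \<in> borel_measurable zrp_space" by simp
  qed
  then show ?thesis by simp
qed

abbreviation exp1 :: "real measure" where
  "exp1 \<equiv> density lborel (\<lambda>x. ennreal (exponential_density 1 x))"

abbreviation unif01 :: "real measure" where
  "unif01 \<equiv> uniform_measure lborel {0<..<1}"

lemma sets_exp1 [measurable_cong]: "sets exp1 = sets borel"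
  by simp

lemma sets_unif01 [measurable_cong]: "sets unif01 = sets borel"
  by simp

lemma prob_space_exp1: "prob_space exp1"
  by (rule prob_space_exponential_density) simp

lemma prob_space_unif01: "prob_space unif01"
  by (rule prob_space_uniform_measure) auto

lemma prob_space_unif01_pair: "prob_space (unif01 \<Otimes>\<^sub>M unif01)"
  by (intro prob_space_pair prob_space_unif01)

lemma prob_space_zrp_drive: "prob_space zrp_drive"
  unfolding zrp_drive_def by (intro prob_space_pair prob_space_exp1 prob_space_unif01)

interpretation drive: sequence_space zrp_drive
  by (intro sequence_space.intro product_prob_spaceI prob_space_zrp_drive)

lemma prob_space_zrp_space: "prob_space zrp_space"
  unfolding zrp_space_def by (rule drive.prob_space_axioms)

lemma space_zrp_space: "space zrp_space = UNIV"
  by (auto simp: zrp_space_def space_PiM zrp_drive_def space_pair_measure PiE_def extensional_def)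

lemma nn_integral_zrp_space_split:
  assumes f: "f \<in> borel_measurable zrp_space"
  shows "(\<integral>\<^sup>+\<omega>. f \<omega> \<partial>zrp_space) = (\<integral>\<^sup>+w. \<integral>\<^sup>+\<omega>. f (case_nat w \<omega>) \<partial>zrp_space \<partial>zrp_drive)"
proof -
  have m: "(\<lambda>(s, \<omega>). case_nat s \<omega>) \<in> zrp_drive \<Otimes>\<^sub>M drive.S \<rightarrow>\<^sub>M drive.S"
    by measurable
  have "(\<integral>\<^sup>+\<omega>. f \<omega> \<partial>zrp_space)
      = (\<integral>\<^sup>+\<omega>. f \<omega> \<partial>distr (zrp_drive \<Otimes>\<^sub>M drive.S) drive.S (\<lambda>(s, \<omega>). case_nat s \<omega>))"
    unfolding drive.PiM_iter zrp_space_def ..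
  also have "\<dots> = (\<integral>\<^sup>+x. f (case_nat (fst x) (snd x)) \<partial>(zrp_drive \<Otimes>\<^sub>M drive.S))"
    using f unfolding zrp_space_def by (subst nn_integral_distr[OF m]) (auto simp: split_beta)
  also have "\<dots> = (\<integral>\<^sup>+w. \<integral>\<^sup>+\<omega>. f (case_nat w \<omega>) \<partial>drive.S \<partial>zrp_drive)"
    using f unfolding zrp_space_def
    by (subst drive.nn_integral_fst[symmetric]) (auto intro: measurable_compose[OF m])
  finally show ?thesis unfolding zrp_space_def .
qed

lemma nn_integral_zrp_drive_mult:
  assumes [measurable]: "F \<in> borel_measurable borel" "G \<in> borel_measurable (unif01 \<Otimes>\<^sub>M unif01)"
  shows "(\<integral>\<^sup>+w. F (fst w) * G (snd w) \<partial>zrp_drive)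
    = (\<integral>\<^sup>+x. F x \<partial>exp1) * (\<integral>\<^sup>+y. G y \<partial>(unif01 \<Otimes>\<^sub>M unif01))"
proof -
  interpret UU: prob_space "unif01 \<Otimes>\<^sub>M unif01" by (rule prob_space_unif01_pair)
  have "(\<lambda>w. F (fst w)) \<in> borel_measurable (exp1 \<Otimes>\<^sub>M (unif01 \<Otimes>\<^sub>M unif01))"
    "(\<lambda>w. G (snd w)) \<in> borel_measurable (exp1 \<Otimes>\<^sub>M (unif01 \<Otimes>\<^sub>M unif01))"
    using measurable_compose[OF measurable_fst[of exp1 "unif01 \<Otimes>\<^sub>M unif01"], of F borel]
      measurable_compose[OF measurable_snd[of exp1 "unif01 \<Otimes>\<^sub>M unif01"], of G borel]
    by (simp_all add: comp_def)
  then have "(\<integral>\<^sup>+w. F (fst w) * G (snd w) \<partial>zrp_drive)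
      = (\<integral>\<^sup>+x. \<integral>\<^sup>+y. F x * G y \<partial>(unif01 \<Otimes>\<^sub>M unif01) \<partial>exp1)"
    unfolding zrp_drive_def by (subst UU.nn_integral_fst[symmetric]) simp_all
  also have "\<dots> = (\<integral>\<^sup>+x. F x * (\<integral>\<^sup>+y. G y \<partial>(unif01 \<Otimes>\<^sub>M unif01)) \<partial>exp1)"
    by (intro nn_integral_cong nn_integral_cmult) simp
  also have "\<dots> = (\<integral>\<^sup>+x. F x \<partial>exp1) * (\<integral>\<^sup>+y. G y \<partial>(unif01 \<Otimes>\<^sub>M unif01))"
    by (rule nn_integral_multc) simp
  finally show ?thesis .
qed

lemma measurable_zrp_drive_mult:
  fixes F :: "real \<Rightarrow> ennreal" and G :: "real \<times> real \<Rightarrow> ennreal"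
  assumes [measurable]: "F \<in> borel_measurable borel" "G \<in> borel_measurable (unif01 \<Otimes>\<^sub>M unif01)"
  shows "(\<lambda>w. F (fst w) * G (snd w)) \<in> borel_measurable zrp_drive"
proof -
  have "(\<lambda>w. F (fst w)) \<in> borel_measurable (exp1 \<Otimes>\<^sub>M (unif01 \<Otimes>\<^sub>M unif01))"
    "(\<lambda>w. G (snd w)) \<in> borel_measurable (exp1 \<Otimes>\<^sub>M (unif01 \<Otimes>\<^sub>M unif01))"
    using measurable_compose[OF measurable_fst[of exp1 "unif01 \<Otimes>\<^sub>M unif01"], of F borel]
      measurable_compose[OF measurable_snd[of exp1 "unif01 \<Otimes>\<^sub>M unif01"], of G borel]
    by (simp_all add: comp_def)
  then show ?thesis unfolding zrp_drive_def by (rule borel_measurable_times_ennreal)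
qed

lemma nn_integral_zrp_drive_add_mult:
  assumes [measurable]: "F \<in> borel_measurable borel" "F' \<in> borel_measurable borel"
    and [measurable]: "G \<in> borel_measurable (unif01 \<Otimes>\<^sub>M unif01)"
  shows "(\<integral>\<^sup>+w. F (fst w) + F' (fst w) * G (snd w) \<partial>zrp_drive)
    = (\<integral>\<^sup>+x. F x \<partial>exp1) + (\<integral>\<^sup>+x. F' x \<partial>exp1) * (\<integral>\<^sup>+y. G y \<partial>(unif01 \<Otimes>\<^sub>M unif01))"
proof -
  have one: "(\<lambda>_. 1::ennreal) \<in> borel_measurable (unif01 \<Otimes>\<^sub>M unif01)" by simp
  have "(\<integral>\<^sup>+w. F (fst w) + F' (fst w) * G (snd w) \<partial>zrp_drive)
      = (\<integral>\<^sup>+w. F (fst w) * 1 \<partial>zrp_drive) + (\<integral>\<^sup>+w. F' (fst w) * G (snd w) \<partial>zrp_drive)"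
    using measurable_zrp_drive_mult[OF _ one, of F] measurable_zrp_drive_mult[of F' G]
    by (subst nn_integral_add[symmetric]) auto
  also have "\<dots> = (\<integral>\<^sup>+x. F x \<partial>exp1) + (\<integral>\<^sup>+x. F' x \<partial>exp1) * (\<integral>\<^sup>+y. G y \<partial>(unif01 \<Otimes>\<^sub>M unif01))"
    using nn_integral_zrp_drive_mult[OF _ one, of F] nn_integral_zrp_drive_mult[of F' G]
      prob_space.emeasure_space_1[OF prob_space_unif01_pair]
    by simp
  finally show ?thesis .
qed

definition drive_regular :: "real \<times> real \<times> real \<Rightarrow> bool" where
  "drive_regular w \<longleftrightarrow>
     0 < fst w \<and> 0 < fst (snd w) \<and> fst (snd w) < 1 \<and> 0 < snd (snd w) \<and> snd (snd w) < 1"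

lemma AE_unif01: "AE b in unif01. 0 < b \<and> b < 1"
  by (rule AE_uniform_measureI) auto

lemma AE_exp1_pos: "AE x in exp1. 0 < x"
proof -
  have "AE x in lborel. x \<noteq> 0" by (rule AE_lborel_singleton)
  then have "AE x in lborel. ennreal (exponential_density 1 x) \<noteq> 0 \<longrightarrow> 0 < x"
    by eventually_elim (auto simp: exponential_density_def)
  then show ?thesis by (subst AE_density) auto
qed

lemma AE_drive_regular: "AE w in zrp_drive. drive_regular w"
proof -
  interpret UU: prob_space "unif01 \<Otimes>\<^sub>M unif01" by (rule prob_space_unif01_pair)
  interpret U: prob_space unif01 by (rule prob_space_unif01)
  interpret E: prob_space exp1 by (rule prob_space_exp1)
  interpret P: pair_sigma_finite exp1 "unif01 \<Otimes>\<^sub>M unif01" ..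
  interpret P2: pair_sigma_finite unif01 unif01 ..
  have UU: "AE p in unif01 \<Otimes>\<^sub>M unif01. 0 < fst p \<and> fst p < 1 \<and> 0 < snd p \<and> snd p < 1"
  proof (rule P2.AE_pair_measure)
    show "{x \<in> space (unif01 \<Otimes>\<^sub>M unif01). 0 < fst x \<and> fst x < 1 \<and> 0 < snd x \<and> snd x < 1}
      \<in> sets (unif01 \<Otimes>\<^sub>M unif01)"
      by measurable
    show "AE x in unif01. AE y in unif01. 0 < fst (x, y) \<and> fst (x, y) < 1 \<and> 0 < snd (x, y) \<and> snd (x, y) < 1"
      using AE_unif01 by eventually_elim (use AE_unif01 in auto)
  qed
  show ?thesis unfolding zrp_drive_def
  proof (rule P.AE_pair_measure)
    show "{x \<in> space (exp1 \<Otimes>\<^sub>M (unif01 \<Otimes>\<^sub>M unif01)). drive_regular x}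
      \<in> sets (exp1 \<Otimes>\<^sub>M (unif01 \<Otimes>\<^sub>M unif01))"
      unfolding drive_regular_def by measurable
    show "AE x in exp1. AE y in unif01 \<Otimes>\<^sub>M unif01. drive_regular (x, y)"
      using AE_exp1_pos by eventually_elim (use UU in \<open>auto simp: drive_regular_def\<close>)
  qed
qed

lemma AE_zrp_space_regular: "AE \<omega> in zrp_space. \<forall>j. drive_regular (\<omega> j)"
  unfolding AE_all_countable zrp_space_def
  by (intro allI AE_PiM_component[OF prob_space_zrp_drive _ AE_drive_regular]) simp

lemma tendsto_exp_neg_mult_at_top:
  fixes c :: real
  assumes "0 < c"
  shows "((\<lambda>x. exp (- c * x)) \<longlongrightarrow> 0) at_top"
proof -
  have "LIM x at_top. (- c) * x :> at_bot"
    by (rule filterlim_tendsto_neg_mult_at_bot[OF tendsto_const])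
      (use assms in \<open>auto intro: filterlim_ident\<close>)
  from filterlim_compose[OF exp_at_bot this] show ?thesis by simp
qed

lemma nn_integral_exp1_exp_neg:
  fixes s :: real
  assumes "- 1 < s"
  shows "(\<integral>\<^sup>+x. ennreal (exp (- s * x)) \<partial>exp1) = ennreal (1 / (1 + s))"
proof -
  have "(\<integral>\<^sup>+x. ennreal (exp (- s * x)) \<partial>exp1)
      = (\<integral>\<^sup>+x. ennreal (exp (- (1 + s) * x)) * indicator {0..} x \<partial>lborel)"
    by (subst nn_integral_density)
      (auto intro!: nn_integral_cong simp: exponential_density_def ennreal_mult'[symmetric]
        exp_add[symmetric] algebra_simps split: split_indicator)
  also have "\<dots> = ennreal (0 - (- exp (- (1 + s) * 0) / (1 + s)))"
  proof (rule nn_integral_FTC_atLeast)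
    show "((\<lambda>x. - exp (- (1 + s) * x) / (1 + s)) \<longlongrightarrow> 0) at_top"
      using tendsto_divide[OF tendsto_minus[OF tendsto_exp_neg_mult_at_top[of "1 + s"]]
          tendsto_const[of "1 + s"]] assms by simp
    show "((\<lambda>x. - exp (- (1 + s) * x) / (1 + s)) has_real_derivative exp (- (1 + s) * x)) (at x)"
      for x
    proof -
      have "((\<lambda>x. - exp (- (1 + s) * x) / (1 + s)) has_real_derivative
          - (exp (- (1 + s) * x) * (- (1 + s) * 1)) / (1 + s)) (at x)"
        by (rule derivative_eq_intros refl)+ (use assms in auto)
      moreover have "- (exp (- (1 + s) * x) * (- (1 + s) * 1)) / (1 + s) = exp (- (1 + s) * x)"
        using assms by (simp add: field_simps)
      ultimately show ?thesis by simp
    qed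
  qed auto
  finally show ?thesis using assms by simp
qed

lemma emeasure_exp1_atLeast:
  fixes M :: real
  assumes "0 \<le> M"
  shows "emeasure exp1 {M..} = ennreal (exp (- M))"
proof -
  have "emeasure exp1 {M..} = (\<integral>\<^sup>+x. ennreal (exp (- x)) * indicator {M..} x \<partial>lborel)"
    using assms by (subst emeasure_density)
      (auto intro!: nn_integral_cong simp: exponential_density_def split: split_indicator)
  also have "\<dots> = ennreal (0 - (- exp (- M)))"
  proof (rule nn_integral_FTC_atLeast[where F = "\<lambda>x. - exp (- x)"])
    show "((\<lambda>x. - exp (- x)) \<longlongrightarrow> (0::real)) at_top"
      using tendsto_minus[OF tendsto_exp_neg_mult_at_top[of 1]] by auto
  qed (auto intro!: derivative_eq_intros)
  finally show ?thesis by simp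
qed

lemma integral_exp_mult:
  fixes a M :: real
  assumes M: "0 \<le> M"
  shows "0 \<le> integral {0..M} (\<lambda>x. exp (a * x))"
    and "exp (a * M) = 1 + a * integral {0..M} (\<lambda>x. exp (a * x))"
proof -
  have int: "(\<lambda>x. exp (a * x)) integrable_on {0..M}"
    by (rule integrable_continuous_interval) (intro continuous_intros)
  then show "0 \<le> integral {0..M} (\<lambda>x. exp (a * x))" by (rule integral_nonneg) auto
  have "((\<lambda>x. a * exp (a * x)) has_integral (exp (a * M) - exp (a * 0))) {0..M}"
  proof (rule fundamental_theorem_of_calculus[OF M])
    fix x
    have "((\<lambda>x. exp (a * x)) has_real_derivative (exp (a * x) * (0 * x + 1 * a))) (at x)"
      by (rule derivative_eq_intros refl)+
    then show "((\<lambda>x. exp (a * x)) has_vector_derivative (a * exp (a * x))) (at x within {0..M})"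
      by (simp add: mult.commute has_real_derivative_iff_has_vector_derivative has_vector_derivative_at_within)
  qed
  from has_integral_unique[OF this has_integral_mult_right[OF integrable_integral[OF int]]]
  show "exp (a * M) = 1 + a * integral {0..M} (\<lambda>x. exp (a * x))" by simp
qed

lemma nn_integral_exp1_exp_lessThan:
  fixes M g :: real
  assumes M: "0 \<le> M"
  shows "(\<integral>\<^sup>+x. ennreal (exp (g * x)) * indicator {..<M} x \<partial>exp1)
    = ennreal (integral {0..M} (\<lambda>x. exp ((g - 1) * x)))"
proof -
  have "AE x in lborel. ennreal (exponential_density 1 x) * (ennreal (exp (g * x)) * indicator {..<M} x)
      = ennreal (indicator {0..M} x * exp ((g - 1) * x))"
    using AE_lborel_singleton[of M]
  proof eventually_elim
    case (elim x)
    show ?case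
    proof (cases "0 \<le> x \<and> x < M")
      case True
      have "exp (- x) * exp (g * x) = exp ((g - 1) * x)"
        by (simp add: exp_add[symmetric] algebra_simps)
      then show ?thesis using True by (simp add: exponential_density_def ennreal_mult[symmetric])
    next
      case False
      then have "x < 0 \<or> M < x" using elim by auto
      then show ?thesis by (auto simp: exponential_density_def)
    qed
  qed
  then have "(\<integral>\<^sup>+x. ennreal (exp (g * x)) * indicator {..<M} x \<partial>exp1)
      = (\<integral>\<^sup>+x. ennreal (indicator {0..M} x * exp ((g - 1) * x)) \<partial>lborel)"
    by (subst nn_integral_density) (auto intro: nn_integral_cong_AE)
  also have "\<dots> = ennreal (integral {0..M} (\<lambda>x. exp ((g - 1) * x)))"
    by (rule nn_integral_has_integral_lebesgue)
      (auto intro!: integrable_integral integrable_continuous_interval continuous_intros)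
  finally show ?thesis .
qed

lemma emeasure_unif01_floor_index:
  fixes q i :: nat
  assumes "i < q"
  shows "emeasure unif01 {a. nat \<lfloor>a * real q\<rfloor> = i} = ennreal (1 / real q)"
proof -
  have q: "0 < q" using assms by simp
  let ?A = "{a::real. nat \<lfloor>a * real q\<rfloor> = i}"
  have "{real i / q <..< (real i + 1) / q} \<subseteq> {0<..<1} \<inter> ?A"
  proof
    fix a assume "a \<in> {real i / q <..< (real i + 1) / q}"
    then have a: "real i < a * q" "a * q < real i + 1" using q by (auto simp: field_simps)
    then have "\<lfloor>a * real q\<rfloor> = int i" by linarith
    moreover have "0 < a"
    proof -
      have "0 < a * q" using a(1) of_nat_0_le_iff[of i] by linarith
      then show ?thesis using q by (simp add: zero_less_mult_iff)
    qed
    moreover have "a < 1"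
    proof -
      have "a * q < q" using a(2) assms by linarith
      then show ?thesis using q by simp
    qed
    ultimately show "a \<in> {0<..<1} \<inter> ?A" by auto
  qed
  moreover have "{0<..<1} \<inter> ?A \<subseteq> {real i / q .. (real i + 1) / q}"
  proof
    fix a assume "a \<in> {0<..<1} \<inter> ?A"
    then have "\<lfloor>a * real q\<rfloor> = int i" using q by auto
    then have "real i \<le> a * q" "a * q < real i + 1" by linarith+
    then show "a \<in> {real i / q .. (real i + 1) / q}" using q by (auto simp: field_simps)
  qed
  ultimately have "emeasure lborel {real i / q <..< (real i + 1) / q} \<le> emeasure lborel ({0<..<1} \<inter> ?A)"
    "emeasure lborel ({0<..<1} \<inter> ?A) \<le> emeasure lborel {real i / q .. (real i + 1) / q}"
    by (intro emeasure_mono; measurable)+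
  then have "emeasure lborel ({0<..<1} \<inter> ?A) = ennreal (1 / real q)"
    using q by (simp add: field_simps diff_divide_distrib)
  moreover have "?A \<in> sets lborel" by measurable
  ultimately show ?thesis by (simp add: emeasure_uniform_measure divide_ennreal_def)
qed

lemma nn_integral_unif01_floor_index:
  fixes q :: nat and f :: "nat \<Rightarrow> ennreal"
  assumes q: "0 < q"
  shows "(\<integral>\<^sup>+a. f (nat \<lfloor>a * real q\<rfloor>) \<partial>unif01) = (\<Sum>i<q. f i) * ennreal (1 / real q)"
proof -
  have "AE a in unif01. f (nat \<lfloor>a * real q\<rfloor>) = (\<Sum>i<q. f i * indicator {a. nat \<lfloor>a * real q\<rfloor> = i} a)"
    using AE_unif01
  proof eventually_elim
    case (elim a)
    then have "nat \<lfloor>a * real q\<rfloor> < q" using q by (intro nat_floor_mult_less) auto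
    then show ?case by (simp add: indicator_def if_distrib sum.delta')
  qed
  then have "(\<integral>\<^sup>+a. f (nat \<lfloor>a * real q\<rfloor>) \<partial>unif01)
      = (\<integral>\<^sup>+a. (\<Sum>i<q. f i * indicator {a. nat \<lfloor>a * real q\<rfloor> = i} a) \<partial>unif01)"
    by (rule nn_integral_cong_AE)
  also have "\<dots> = (\<Sum>i<q. (\<integral>\<^sup>+a. f i * indicator {a. nat \<lfloor>a * real q\<rfloor> = i} a \<partial>unif01))"
    by (rule nn_integral_sum) measurable
  also have "\<dots> = (\<Sum>i<q. f i * emeasure unif01 {a. nat \<lfloor>a * real q\<rfloor> = i})"
    by (intro sum.cong refl nn_integral_cmult_indicator) measurable
  also have "\<dots> = (\<Sum>i<q. f i) * ennreal (1 / real q)"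
    by (simp del: emeasure_uniform_measure add: emeasure_unif01_floor_index sum_distrib_right)
  finally show ?thesis .
qed

section \<open>The expected effect of one jump on \<open>exp (- \<mu> \<eta>(v))\<close>\<close>

lemma measurable_zrp_step_unif01:
  fixes \<psi> :: "(nat \<Rightarrow> nat) \<Rightarrow> ennreal"
  shows "(\<lambda>p. \<psi> (zrp_step n eta (fst p) (snd p))) \<in> borel_measurable (unif01 \<Otimes>\<^sub>M unif01)"
  unfolding zrp_step_eq_idx
proof (rule measurable_compose_countable'[where I = UNIV and
    g = "\<lambda>p. nat \<lfloor>fst p * real (card (occupied n eta))\<rfloor>"])
  fix i :: nat
  show "(\<lambda>p. \<psi> (zrp_step_idx n eta i (nat \<lfloor>snd p * real (n - 1)\<rfloor>)))
      \<in> borel_measurable (unif01 \<Otimes>\<^sub>M unif01)"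
    by (rule measurable_compose_countable'[where I = UNIV and g = "\<lambda>p. nat \<lfloor>snd p * real (n - 1)\<rfloor>"])
      (rule measurable_const, simp, measurable)
next
  show "(\<lambda>p. nat \<lfloor>fst p * real (card (occupied n eta))\<rfloor>) \<in> unif01 \<Otimes>\<^sub>M unif01 \<rightarrow>\<^sub>M count_space UNIV"
    using measurable_compose[OF measurable_fst, of "\<lambda>x. nat \<lfloor>x * real (card (occupied n eta))\<rfloor>"
        unif01 unif01 "count_space UNIV"]
    by (simp add: comp_def)
qed simp

lemma nn_integral_zrp_src:
  assumes "zrp_conf n r eta" "1 \<le> r"
  shows "(\<integral>\<^sup>+a. g (zrp_src n eta a) \<partial>unif01)
    = (\<Sum>u\<in>occupied n eta. g u) * ennreal (1 / real (card (occupied n eta)))"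
proof -
  define xs where "xs = sorted_list_of_set (occupied n eta)"
  define q where "q = card (occupied n eta)"
  have "(\<integral>\<^sup>+a. g (zrp_src n eta a) \<partial>unif01) = (\<integral>\<^sup>+a. (\<lambda>i. g (xs ! i)) (nat \<lfloor>a * real q\<rfloor>) \<partial>unif01)"
    by (simp add: zrp_src_def xs_def q_def)
  also have "\<dots> = (\<Sum>i<q. g (xs ! i)) * ennreal (1 / real q)"
    using card_occupied_pos[OF assms] unfolding q_def by (rule nn_integral_unif01_floor_index)
  also have "(\<Sum>i<q. g (xs ! i)) = (\<Sum>u\<in>occupied n eta. g u)"
    by (rule sum.reindex_bij_betw[OF bij_betw_nth]) (auto simp: xs_def q_def)
  finally show ?thesis by (simp add: q_def)
qed

lemma nn_integral_zrp_tgt: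
  assumes "s < n" "2 \<le> n"
  shows "(\<integral>\<^sup>+b. g (zrp_tgt n s b) \<partial>unif01) = (\<Sum>u\<in>{0..<n} - {s}. g u) * ennreal (1 / real (n - 1))"
proof -
  define xs where "xs = sorted_list_of_set ({0..<n} - {s})"
  have "(\<integral>\<^sup>+b. g (zrp_tgt n s b) \<partial>unif01) = (\<integral>\<^sup>+b. (\<lambda>i. g (xs ! i)) (nat \<lfloor>b * real (n - 1)\<rfloor>) \<partial>unif01)"
    by (simp add: zrp_tgt_def xs_def)
  also have "\<dots> = (\<Sum>i<n - 1. g (xs ! i)) * ennreal (1 / real (n - 1))"
    using assms by (intro nn_integral_unif01_floor_index) simp
  also have "(\<Sum>i<n - 1. g (xs ! i)) = (\<Sum>u\<in>{0..<n} - {s}. g u)"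
    using assms by (intro sum.reindex_bij_betw[OF bij_betw_nth]) (auto simp: xs_def)
  finally show ?thesis .
qed

text \<open>The mean of \<open>exp (- \<mu> \<eta>'(v))\<close> over the uniform target, given that \<open>\<eta>(v) = x\<close> and that
  the source of the jump is \<open>u\<close>.\<close>

definition src_exp_moment :: "nat \<Rightarrow> real \<Rightarrow> nat \<Rightarrow> nat \<Rightarrow> nat \<Rightarrow> real" where
  "src_exp_moment n \<mu> x v u =
     (if u = v then exp (- \<mu> * (real x - 1))
      else (exp (- \<mu> * (real x + 1)) + (real n - 2) * exp (- \<mu> * real x)) / (real n - 1))"

lemma src_exp_moment_nonneg: "2 \<le> n \<Longrightarrow> 0 \<le> src_exp_moment n \<mu> x v u"
  unfolding src_exp_moment_def by (auto intro!: divide_nonneg_pos add_nonneg_nonneg)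

lemma nn_integral_exp_at_zrp_tgt:
  assumes s: "s < n" "s \<noteq> v" and v: "v < n" and n: "2 \<le> n"
  shows "(\<integral>\<^sup>+b. ennreal (exp (- \<mu> * (if zrp_tgt n s b = v then real x + 1 else real x))) \<partial>unif01)
    = ennreal ((exp (- \<mu> * (real x + 1)) + (real n - 2) * exp (- \<mu> * real x)) / (real n - 1))"
proof -
  define g where "g u = exp (- \<mu> * (if u = v then real x + 1 else real x))" for u
  have "(\<integral>\<^sup>+b. ennreal (g (zrp_tgt n s b)) \<partial>unif01)
      = (\<Sum>u\<in>{0..<n} - {s}. ennreal (g u)) * ennreal (1 / real (n - 1))"
    by (rule nn_integral_zrp_tgt[OF s(1) n])
  also have "(\<Sum>u\<in>{0..<n} - {s}. ennreal (g u)) = ennreal (\<Sum>u\<in>{0..<n} - {s}. g u)"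
    by (rule sum_ennreal) (simp add: g_def)
  also have "(\<Sum>u\<in>{0..<n} - {s}. g u) = g v + (\<Sum>u\<in>{0..<n} - {s} - {v}. exp (- \<mu> * real x))"
    using s v by (subst sum.remove[of _ v]) (auto intro!: sum.cong simp: g_def)
  also have "\<dots> = exp (- \<mu> * (real x + 1)) + (real n - 2) * exp (- \<mu> * real x)"
  proof -
    have "card ({0..<n} - {s} - {v}) = n - 2" using s v by (simp add: card_Diff_subset)
    then show ?thesis using n by (simp add: of_nat_diff g_def)
  qed
  also have "ennreal \<dots> * ennreal (1 / real (n - 1))
      = ennreal ((exp (- \<mu> * (real x + 1)) + (real n - 2) * exp (- \<mu> * real x)) / (real n - 1))"
    using n by (subst ennreal_mult''[symmetric]) (auto simp: of_nat_diff)
  finally show ?thesis by (simp add: g_def)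
qed

lemma nn_integral_exp_zrp_step_src:
  assumes conf: "zrp_conf n r eta" "1 \<le> r" and n: "2 \<le> n" and v: "v < n" and a: "0 \<le> a" "a < 1"
  shows "(\<integral>\<^sup>+b. ennreal (exp (- \<mu> * real (zrp_step n eta a b v))) \<partial>unif01)
    = ennreal (src_exp_moment n \<mu> (eta v) v (zrp_src n eta a))"
proof -
  interpret U: prob_space unif01 by (rule prob_space_unif01)
  define s where "s = zrp_src n eta a"
  have "s \<in> occupied n eta" unfolding s_def using zrp_src_occupied[OF conf a] .
  then have sn: "s < n" and s0: "0 < eta s" by (auto simp: occupied_def)
  have "AE b in unif01. ennreal (exp (- \<mu> * real (zrp_step n eta a b v))) =
      (if s = v then ennreal (exp (- \<mu> * (real (eta v) - 1)))
       else ennreal (exp (- \<mu> * (if zrp_tgt n s b = v then real (eta v) + 1 else real (eta v)))))"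
    using AE_unif01
  proof eventually_elim
    case (elim b)
    then show ?case
      using zrp_step_at[OF conf n a, where b = b and v = v] s0 by (auto simp: s_def of_nat_diff)
  qed
  then have "(\<integral>\<^sup>+b. ennreal (exp (- \<mu> * real (zrp_step n eta a b v))) \<partial>unif01) =
      (if s = v then ennreal (exp (- \<mu> * (real (eta v) - 1)))
       else (\<integral>\<^sup>+b. ennreal (exp (- \<mu> * (if zrp_tgt n s b = v then real (eta v) + 1 else real (eta v)))) \<partial>unif01))"
    by (subst nn_integral_cong_AE) (auto simp: U.emeasure_space_1)
  then show ?thesis
    using nn_integral_exp_at_zrp_tgt[OF sn _ v n] by (simp add: src_exp_moment_def s_def)
qed

lemma nn_integral_exp_zrp_step:
  assumes conf: "zrp_conf n r eta" "1 \<le> r" and n: "2 \<le> n" and v: "v < n"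
  shows "(\<integral>\<^sup>+p. ennreal (exp (- \<mu> * real (zrp_step n eta (fst p) (snd p) v))) \<partial>(unif01 \<Otimes>\<^sub>M unif01))
    = ennreal ((\<Sum>u\<in>occupied n eta. src_exp_moment n \<mu> (eta v) v u) / real (card (occupied n eta)))"
proof -
  interpret U: prob_space unif01 by (rule prob_space_unif01)
  have "(\<integral>\<^sup>+p. ennreal (exp (- \<mu> * real (zrp_step n eta (fst p) (snd p) v))) \<partial>(unif01 \<Otimes>\<^sub>M unif01))
      = (\<integral>\<^sup>+a. \<integral>\<^sup>+b. ennreal (exp (- \<mu> * real (zrp_step n eta a b v))) \<partial>unif01 \<partial>unif01)"
    using U.nn_integral_fst[OF measurable_zrp_step_unif01[of "\<lambda>e. ennreal (exp (- \<mu> * real (e v)))"]]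
    by simp
  also have "\<dots> = (\<integral>\<^sup>+a. ennreal (src_exp_moment n \<mu> (eta v) v (zrp_src n eta a)) \<partial>unif01)"
  proof (rule nn_integral_cong_AE)
    show "AE a in unif01. (\<integral>\<^sup>+b. ennreal (exp (- \<mu> * real (zrp_step n eta a b v))) \<partial>unif01)
        = ennreal (src_exp_moment n \<mu> (eta v) v (zrp_src n eta a))"
      using AE_unif01 by eventually_elim (rule nn_integral_exp_zrp_step_src[OF conf n v]; simp)
  qed
  also have "\<dots> = (\<Sum>u\<in>occupied n eta. ennreal (src_exp_moment n \<mu> (eta v) v u))
      * ennreal (1 / real (card (occupied n eta)))"
    by (rule nn_integral_zrp_src[OF conf])
  also have "\<dots> = ennreal ((\<Sum>u\<in>occupied n eta. src_exp_moment n \<mu> (eta v) v u) / real (card (occupied n eta)))"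
    using n card_occupied_pos[OF conf]
    by (subst sum_ennreal) (auto simp: src_exp_moment_nonneg ennreal_mult''[symmetric] intro!: sum_nonneg)
  finally show ?thesis .
qed

lemma mean_src_exp_moment_occupied:
  assumes "v \<in> A" "finite A" "card A \<le> n" "2 \<le> n" "0 \<le> \<mu>"
  shows "exp (- \<mu> * real x) * (1 + (exp \<mu> + exp (- \<mu>) - 2) / real (card A))
    \<le> (\<Sum>u\<in>A. src_exp_moment n \<mu> x v u) / real (card A)"
proof -
  define P where "P = exp (- \<mu> * real x)"
  define q where "q = real (card A)"
  have A: "0 < card A" using assms(1,2) card_gt_0_iff by blast
  then have q: "1 \<le> q" "q \<le> real n" using assms(3) by (auto simp: q_def)
  have "(\<Sum>u\<in>A. src_exp_moment n \<mu> x v u)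
      = src_exp_moment n \<mu> x v v + (\<Sum>u\<in>A - {v}. src_exp_moment n \<mu> x v u)"
    using assms by (subst sum.remove[of _ v]) auto
  also have "(\<Sum>u\<in>A - {v}. src_exp_moment n \<mu> x v u)
      = (\<Sum>u\<in>A - {v}. (P * exp (- \<mu>) + (real n - 2) * P) / (real n - 1))"
    by (intro sum.cong) (auto simp: src_exp_moment_def P_def exp_add[symmetric] algebra_simps)
  also have "\<dots> = (q - 1) * ((P * exp (- \<mu>) + (real n - 2) * P) / (real n - 1))"
    using A assms(1,2) by (simp add: q_def of_nat_diff)
  also have "src_exp_moment n \<mu> x v v = P * exp \<mu>"
    by (simp add: src_exp_moment_def P_def exp_add[symmetric] algebra_simps)
  finally have sum: "(\<Sum>u\<in>A. src_exp_moment n \<mu> x v u)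
      = P * exp \<mu> + (q - 1) * ((P * exp (- \<mu>) + (real n - 2) * P) / (real n - 1))" .
  have "(P * exp \<mu> + (q - 1) * ((P * exp (- \<mu>) + (real n - 2) * P) / (real n - 1))) / q
      - P * (1 + (exp \<mu> + exp (- \<mu>) - 2) / q)
      = P * (real n - q) * (1 - exp (- \<mu>)) / ((real n - 1) * q)"
    using q assms(4) by (simp add: field_simps)
  moreover have "0 \<le> P * (real n - q) * (1 - exp (- \<mu>)) / ((real n - 1) * q)"
    using q assms(4,5) by (intro divide_nonneg_pos mult_nonneg_nonneg) (auto simp: P_def)
  ultimately show ?thesis unfolding sum by (simp add: P_def q_def)
qed

lemma mean_src_exp_moment_empty:
  assumes "v \<notin> A" "1 \<le> card A" "card A \<le> n - 1" "2 \<le> n" "0 \<le> \<mu>"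
  shows "1 - (1 - exp (- \<mu>)) / real (card A) \<le> (\<Sum>u\<in>A. src_exp_moment n \<mu> 0 v u) / real (card A)"
proof -
  define q where "q = real (card A)"
  have q: "1 \<le> q" "q \<le> real n - 1" using assms by (auto simp: q_def)
  have "(1 - exp (- \<mu>)) / (real n - 1) \<le> (1 - exp (- \<mu>)) / q"
    using q assms(5) by (intro divide_left_mono) auto
  then have "1 - (1 - exp (- \<mu>)) / q \<le> (exp (- \<mu>) + (real n - 2)) / (real n - 1)"
    using assms(4) by (simp add: field_simps)
  also have "\<dots> = (\<Sum>u\<in>A. (exp (- \<mu>) + (real n - 2)) / (real n - 1)) / q"
    using q by (simp add: q_def)
  also have "\<dots> = (\<Sum>u\<in>A. src_exp_moment n \<mu> 0 v u) / q"
    using assms(1) by (intro arg_cong[where f = "\<lambda>x. x / q"] sum.cong) (auto simp: src_exp_moment_def)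
  finally show ?thesis by (simp add: q_def)
qed

lemma nn_integral_exp_zrp_step_occupied:
  assumes conf: "zrp_conf n r eta" "1 \<le> r" and n: "2 \<le> n" and v: "v < n"
    and X: "0 < eta v" and \<mu>: "0 \<le> \<mu>"
  shows "ennreal (exp (- \<mu> * real (eta v)) * (1 + (exp \<mu> + exp (- \<mu>) - 2) / real (card (occupied n eta))))
    \<le> (\<integral>\<^sup>+p. ennreal (exp (- \<mu> * real (zrp_step n eta (fst p) (snd p) v))) \<partial>(unif01 \<Otimes>\<^sub>M unif01))"
  unfolding nn_integral_exp_zrp_step[OF conf n v] using X v n \<mu> card_occupied_le[of n eta]
  by (intro ennreal_leI mean_src_exp_moment_occupied) (auto simp: occupied_def)

lemma nn_integral_exp_zrp_step_empty:
  assumes conf: "zrp_conf n r eta" "1 \<le> r" and n: "2 \<le> n" and v: "v < n"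
    and X: "eta v = 0" and \<mu>: "0 \<le> \<mu>"
  shows "ennreal (1 - (1 - exp (- \<mu>)) / real (card (occupied n eta)))
    \<le> (\<integral>\<^sup>+p. ennreal (exp (- \<mu> * real (zrp_step n eta (fst p) (snd p) v))) \<partial>(unif01 \<Otimes>\<^sub>M unif01))"
  unfolding nn_integral_exp_zrp_step[OF conf n v] X
  using card_occupied_pos[OF conf] card_occupied_le_if_empty[of v n eta, OF v X] n \<mu> X
  by (intro ennreal_leI mean_src_exp_moment_empty) (auto simp: occupied_def)

section \<open>An exponential submartingale\<close>

locale zero_time_potential =
  fixes n r v :: nat and T lam \<mu> \<kappa> c :: real
  assumes n2: "2 \<le> n" and r1: "1 \<le> r" and vn: "v < n"
    and T_pos: "0 < T" and lam_nonneg: "0 \<le> lam" and mu_nonneg: "0 \<le> \<mu>"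
    and kappa_nonneg: "0 \<le> \<kappa>" and c_pos: "0 < c"
    and kappa_le: "\<kappa> \<le> exp \<mu> + exp (- \<mu>) - 2"
    and rate_gap: "1 - exp (- \<mu>) \<le> lam - \<kappa>"
begin

definition admissible :: "zstate \<Rightarrow> bool" where
  "admissible s \<longleftrightarrow> zrp_conf n r (fst s) \<and> 0 \<le> fst (snd s) \<and> 0 \<le> snd (snd s)"

definition potential :: "zstate \<Rightarrow> ennreal" where
  "potential s =
     (if \<not> admissible s then 0
      else if c \<le> snd (snd s) then ennreal (exp (lam * c))
      else if T \<le> fst (snd s) then ennreal (exp (lam * c - \<kappa> * T))
      else ennreal (exp (lam * snd (snd s) - \<mu> * real (fst s v) - \<kappa> * fst (snd s))))"

lemma admissible_zstep:
  assumes "admissible (eta, J, Z)" "drive_regular w"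
  shows "admissible (zstep n v T (eta, J, Z) w)"
proof -
  have conf: "zrp_conf n r eta" and "0 \<le> J" "0 \<le> Z" using assms(1) by (auto simp: admissible_def)
  moreover have "zrp_conf n r (zrp_step n eta (fst (snd w)) (snd (snd w)))"
    using assms(2) by (intro zrp_conf_step[OF conf r1 n2]) (auto simp: drive_regular_def)
  moreover have "0 \<le> fst w / real (card (occupied n eta))"
    using assms(2) by (simp add: drive_regular_def)
  ultimately show ?thesis by (auto simp: admissible_def zstep_eq)
qed

lemma exp_le_potential_frozen:
  assumes "admissible s" "z \<le> c" "0 \<le> j" "c \<le> snd (snd s) \<or> T \<le> fst (snd s) \<and> T \<le> j"
  shows "ennreal (exp (lam * z - \<kappa> * j)) \<le> potential s"
proof -
  have "lam * z \<le> lam * c" using assms(2) lam_nonneg by (rule mult_left_mono)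
  moreover have "0 \<le> \<kappa> * j" using kappa_nonneg assms(3) by simp
  moreover have "\<kappa> * T \<le> \<kappa> * j" if "T \<le> j" using that kappa_nonneg by (rule mult_left_mono)
  ultimately show ?thesis using assms(1,4) by (auto simp: potential_def intro!: ennreal_leI)
qed

lemma exp_le_potential:
  assumes "admissible (eta, J, Z)" "z \<le> c" "z \<le> Z" "0 \<le> j" "min J T \<le> j"
  shows "ennreal (exp (lam * z - \<mu> * real (eta v) - \<kappa> * j)) \<le> potential (eta, J, Z)"
proof (cases "c \<le> Z \<or> T \<le> J")
  case True
  have "exp (lam * z - \<mu> * real (eta v) - \<kappa> * j) \<le> exp (lam * z - \<kappa> * j)"
    using mu_nonneg by simp
  also have "ennreal \<dots> \<le> potential (eta, J, Z)"
    using True assms by (intro exp_le_potential_frozen) auto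
  finally show ?thesis by (simp add: ennreal_leI)
next
  case False
  have "lam * z \<le> lam * Z" using assms(3) lam_nonneg by (rule mult_left_mono)
  moreover have "\<kappa> * J \<le> \<kappa> * j" using False assms(5) kappa_nonneg by (intro mult_left_mono) auto
  ultimately show ?thesis using False assms(1) by (auto simp: potential_def intro!: ennreal_leI)
qed

lemma potential_zstep_frozen:
  assumes adm: "admissible (eta, J, Z)" and frozen: "c \<le> Z \<or> T \<le> J"
  shows "potential (eta, J, Z) \<le> (\<integral>\<^sup>+w. potential (zstep n v T (eta, J, Z) w) \<partial>zrp_drive)"
proof -
  define j where "j = (if c \<le> Z then 0 else T)"
  have pot: "potential (eta, J, Z) = ennreal (exp (lam * c - \<kappa> * j))"
    using adm frozen by (auto simp: potential_def j_def)
  have "AE w in zrp_drive. potential (eta, J, Z) \<le> potential (zstep n v T (eta, J, Z) w)"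
    using AE_drive_regular
  proof eventually_elim
    case (elim w)
    have "0 \<le> fst w / real (card (occupied n eta))" using elim by (simp add: drive_regular_def)
    then show ?case unfolding pot using frozen T_pos
      by (intro exp_le_potential_frozen admissible_zstep[OF adm elim])
        (auto simp: j_def zstep_eq)
  qed
  then have "(\<integral>\<^sup>+w. potential (eta, J, Z) \<partial>zrp_drive)
      \<le> (\<integral>\<^sup>+w. potential (zstep n v T (eta, J, Z) w) \<partial>zrp_drive)"
    by (rule nn_integral_mono_AE)
  then show ?thesis by (simp add: prob_space.emeasure_space_1[OF prob_space_zrp_drive])
qed

lemma nn_integral_potential_zstep_occupied:
  assumes adm: "admissible (eta, J, Z)" and Zc: "Z < c" and X: "0 < eta v"
  defines "q \<equiv> real (card (occupied n eta))"
  shows "ennreal (exp (lam * Z - \<kappa> * J)) * (ennreal (1 / (1 + \<kappa> / q)) *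
      (\<integral>\<^sup>+p. ennreal (exp (- \<mu> * real (zrp_step n eta (fst p) (snd p) v))) \<partial>(unif01 \<Otimes>\<^sub>M unif01)))
    \<le> (\<integral>\<^sup>+w. potential (zstep n v T (eta, J, Z) w) \<partial>zrp_drive)"
proof -
  have conf: "zrp_conf n r eta" and J0: "0 \<le> J" using adm by (auto simp: admissible_def)
  have q: "0 < q" using card_occupied_pos[OF conf r1] by (simp add: q_def)
  define K where "K = exp (lam * Z - \<kappa> * J)"
  define F where "F x = ennreal (exp (- (\<kappa> / q) * x))" for x
  define G where "G p = ennreal (exp (- \<mu> * real (zrp_step n eta (fst p) (snd p) v)))" for p
  have mF: "F \<in> borel_measurable borel" unfolding F_def by measurable
  have mG: "G \<in> borel_measurable (unif01 \<Otimes>\<^sub>M unif01)"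
    unfolding G_def by (rule measurable_zrp_step_unif01)
  have "(\<integral>\<^sup>+x. F x \<partial>exp1) = ennreal (1 / (1 + \<kappa> / q))"
    unfolding F_def using q kappa_nonneg
    by (intro nn_integral_exp1_exp_neg) (smt (verit) divide_nonneg_pos)
  then have "ennreal K * (ennreal (1 / (1 + \<kappa> / q)) * (\<integral>\<^sup>+y. G y \<partial>(unif01 \<Otimes>\<^sub>M unif01)))
      = (\<integral>\<^sup>+w. ennreal K * (F (fst w) * G (snd w)) \<partial>zrp_drive)"
    using measurable_zrp_drive_mult[OF mF mG] nn_integral_zrp_drive_mult[OF mF mG]
    by (simp add: nn_integral_cmult)
  also have "\<dots> \<le> (\<integral>\<^sup>+w. potential (zstep n v T (eta, J, Z) w) \<partial>zrp_drive)"
  proof (rule nn_integral_mono_AE)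
    show "AE w in zrp_drive. ennreal K * (F (fst w) * G (snd w)) \<le> potential (zstep n v T (eta, J, Z) w)"
      using AE_drive_regular
    proof eventually_elim
      case (elim w)
      define h where "h = fst w / q"
      have "0 \<le> h" using elim q by (simp add: drive_regular_def h_def)
      have "ennreal K * (F (fst w) * G (snd w))
          = ennreal (exp (lam * Z - \<mu> * real (zrp_step n eta (fst (snd w)) (snd (snd w)) v) - \<kappa> * (J + h)))"
        by (simp add: F_def G_def K_def h_def ennreal_mult[symmetric] exp_add[symmetric] algebra_simps)
      also have "\<dots> \<le> potential (zstep n v T (eta, J, Z) w)"
        using admissible_zstep[OF adm elim] Zc J0 \<open>0 \<le> h\<close> X
        by (simp add: zstep_eq h_def q_def exp_le_potential)
      finally show ?case .
    qed
  qed
  finally show ?thesis by (simp add: K_def G_def)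
qed

lemma potential_zstep_occupied:
  assumes adm: "admissible (eta, J, Z)" and Zc: "Z < c" and JT: "J < T" and X: "0 < eta v"
  shows "potential (eta, J, Z) \<le> (\<integral>\<^sup>+w. potential (zstep n v T (eta, J, Z) w) \<partial>zrp_drive)"
proof -
  have conf: "zrp_conf n r eta" using adm by (simp add: admissible_def)
  define q where "q = real (card (occupied n eta))"
  have q: "0 < q" using card_occupied_pos[OF conf r1] by (simp add: q_def)
  define K where "K = exp (lam * Z - \<kappa> * J)"
  define P where "P = exp (- \<mu> * real (eta v))"
  define D where "D = exp \<mu> + exp (- \<mu>) - 2"
  have "potential (eta, J, Z) = ennreal (K * P)"
    using adm Zc JT by (simp add: potential_def K_def P_def exp_add[symmetric] algebra_simps)
  text \<open>The holding time costs the factor \<open>1/(1 + \<kappa>/q)\<close>, the jump gains \<open>1 + D/q \<ge> 1 + \<kappa>/q\<close>.\<close>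
  also have "\<dots> \<le> ennreal (K * (1 / (1 + \<kappa> / q) * (P * (1 + D / q))))"
  proof (rule ennreal_leI)
    have "1 + \<kappa> / q \<le> 1 + D / q" using kappa_le q by (simp add: D_def divide_right_mono)
    moreover have "0 < 1 + \<kappa> / q" using q kappa_nonneg by (simp add: add_pos_nonneg)
    ultimately have "1 \<le> (1 + D / q) / (1 + \<kappa> / q)" by (simp add: le_divide_eq)
    then have "K * P * 1 \<le> K * P * ((1 + D / q) / (1 + \<kappa> / q))"
      by (intro mult_left_mono) (simp_all add: K_def P_def)
    then show "K * P \<le> K * (1 / (1 + \<kappa> / q) * (P * (1 + D / q)))"
      by (simp add: divide_inverse mult_ac)
  qed
  also have "\<dots> = ennreal K * (ennreal (1 / (1 + \<kappa> / q)) * ennreal (P * (1 + D / q)))"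
  proof -
    have a: "0 \<le> 1 / (1 + \<kappa> / q)" using q kappa_nonneg by simp
    have b: "0 \<le> P * (1 + D / q)" using q kappa_le kappa_nonneg by (simp add: P_def D_def)
    have "0 \<le> K" by (simp add: K_def)
    then show ?thesis by (simp only: ennreal_mult[OF _ mult_nonneg_nonneg[OF a b]] ennreal_mult[OF a b])
  qed
  also have "\<dots> \<le> ennreal K * (ennreal (1 / (1 + \<kappa> / q)) *
      (\<integral>\<^sup>+p. ennreal (exp (- \<mu> * real (zrp_step n eta (fst p) (snd p) v))) \<partial>(unif01 \<Otimes>\<^sub>M unif01)))"
    using nn_integral_exp_zrp_step_occupied[OF conf r1 n2 vn X mu_nonneg]
    by (intro mult_left_mono) (auto simp: P_def D_def q_def)
  also have "\<dots> \<le> (\<integral>\<^sup>+w. potential (zstep n v T (eta, J, Z) w) \<partial>zrp_drive)"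
    unfolding K_def q_def by (rule nn_integral_potential_zstep_occupied[OF adm Zc X])
  finally show ?thesis .
qed

text \<open>While \<open>v\<close> is empty, the potential grows like \<open>exp ((lam - \<kappa>) h)\<close> during a holding time
  \<open>h\<close>, until it freezes after time \<open>m\<close>.\<close>

lemma exp_le_potential_empty:
  assumes adm: "admissible (eta', J + h, Z + min h (T - J))"
    and Zc: "Z < c" and JT: "J < T" and J0: "0 \<le> J" and h: "0 < h"
  defines "m \<equiv> min (c - Z) (T - J)"
  shows "ennreal (exp (lam * Z - \<kappa> * J) *
      (if m \<le> h then exp ((lam - \<kappa>) * m) else exp ((lam - \<kappa>) * h - \<mu> * real (eta' v))))
    \<le> potential (eta', J + h, Z + min h (T - J))"
proof (cases "m \<le> h")
  case True
  have "exp (lam * Z - \<kappa> * J) * exp ((lam - \<kappa>) * m) = exp (lam * (Z + m) - \<kappa> * (J + m))"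
    by (simp add: exp_add[symmetric] algebra_simps)
  moreover have "ennreal (exp (lam * (Z + m) - \<kappa> * (J + m))) \<le> potential (eta', J + h, Z + min h (T - J))"
    using True JT J0 Zc by (intro exp_le_potential_frozen[OF adm]) (auto simp: m_def)
  ultimately show ?thesis using True by simp
next
  case False
  have "exp (lam * Z - \<kappa> * J) * exp ((lam - \<kappa>) * h - \<mu> * real (eta' v))
      = exp (lam * (Z + h) - \<mu> * real (eta' v) - \<kappa> * (J + h))"
    by (simp add: exp_add[symmetric] algebra_simps)
  moreover have "ennreal (exp (lam * (Z + h) - \<mu> * real (eta' v) - \<kappa> * (J + h)))
      \<le> potential (eta', J + h, Z + min h (T - J))"
    using False J0 h by (intro exp_le_potential[OF adm]) (auto simp: m_def)
  ultimately show ?thesis using False by simp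
qed

lemma potential_zstep_empty_ge:
  assumes adm: "admissible (eta, J, Z)" and Zc: "Z < c" and JT: "J < T" and X: "eta v = 0"
    and w: "drive_regular w"
  defines "q \<equiv> real (card (occupied n eta))" and "m \<equiv> min (c - Z) (T - J)"
  shows "ennreal (exp (lam * Z - \<kappa> * J)) *
      (ennreal (exp ((lam - \<kappa>) * m)) * indicator {q * m..} (fst w)
       + ennreal (exp ((lam - \<kappa>) / q * fst w)) * indicator {..<q * m} (fst w)
         * ennreal (exp (- \<mu> * real (zrp_step n eta (fst (snd w)) (snd (snd w)) v))))
    \<le> potential (zstep n v T (eta, J, Z) w)"
proof -
  have conf: "zrp_conf n r eta" and J0: "0 \<le> J" using adm by (auto simp: admissible_def)
  have q1: "1 \<le> q" using card_occupied_pos[OF conf r1] by (simp add: q_def)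
  define h where "h = fst w / q"
  define X' where "X' = real (zrp_step n eta (fst (snd w)) (snd (snd w)) v)"
  have h: "0 < h" "fst w = q * h" using w q1 by (auto simp: drive_regular_def h_def)
  have step_w: "zstep n v T (eta, J, Z) w
      = (zrp_step n eta (fst (snd w)) (snd (snd w)), J + h, Z + min h (T - J))"
  proof -
    have "max 0 (min (J + h) T - J) = min h (T - J)" using JT h by linarith
    then show ?thesis using X by (simp add: zstep_eq h_def q_def)
  qed
  have "ennreal (exp ((lam - \<kappa>) * m)) * indicator {q * m..} (fst w)
      + ennreal (exp ((lam - \<kappa>) / q * fst w)) * indicator {..<q * m} (fst w) * ennreal (exp (- \<mu> * X'))
      = (if m \<le> h then ennreal (exp ((lam - \<kappa>) * m))
         else ennreal (exp ((lam - \<kappa>) * h)) * ennreal (exp (- \<mu> * X')))"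
    using h q1 by (simp add: indicator_def)
  also have "\<dots> = ennreal (if m \<le> h then exp ((lam - \<kappa>) * m) else exp ((lam - \<kappa>) * h - \<mu> * X'))"
    by (simp add: ennreal_mult[symmetric] exp_add[symmetric])
  finally have "ennreal (exp (lam * Z - \<kappa> * J)) *
      (ennreal (exp ((lam - \<kappa>) * m)) * indicator {q * m..} (fst w)
       + ennreal (exp ((lam - \<kappa>) / q * fst w)) * indicator {..<q * m} (fst w) * ennreal (exp (- \<mu> * X')))
      = ennreal (exp (lam * Z - \<kappa> * J) *
          (if m \<le> h then exp ((lam - \<kappa>) * m) else exp ((lam - \<kappa>) * h - \<mu> * X')))"
    by (simp add: ennreal_mult)
  also have "\<dots> \<le> potential (zstep n v T (eta, J, Z) w)"
    unfolding step_w m_def X'_def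
    by (rule exp_le_potential_empty[OF _ Zc JT J0 h(1)]) (use admissible_zstep[OF adm w] step_w in simp)
  finally show ?thesis by (simp add: X'_def)
qed

lemma nn_integral_potential_zstep_empty:
  assumes adm: "admissible (eta, J, Z)" and Zc: "Z < c" and JT: "J < T" and X: "eta v = 0"
  defines "q \<equiv> real (card (occupied n eta))" and "m \<equiv> min (c - Z) (T - J)"
  shows "ennreal (exp (lam * Z - \<kappa> * J)) *
      ((\<integral>\<^sup>+x. ennreal (exp ((lam - \<kappa>) * m)) * indicator {q * m..} x \<partial>exp1)
       + (\<integral>\<^sup>+x. ennreal (exp ((lam - \<kappa>) / q * x)) * indicator {..<q * m} x \<partial>exp1)
         * (\<integral>\<^sup>+p. ennreal (exp (- \<mu> * real (zrp_step n eta (fst p) (snd p) v))) \<partial>(unif01 \<Otimes>\<^sub>M unif01)))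
    \<le> (\<integral>\<^sup>+w. potential (zstep n v T (eta, J, Z) w) \<partial>zrp_drive)"
proof -
  define F where "F x = ennreal (exp ((lam - \<kappa>) * m)) * indicator {q * m..} x" for x :: real
  define F' where "F' x = ennreal (exp ((lam - \<kappa>) / q * x)) * indicator {..<q * m} x" for x :: real
  define G where "G p = ennreal (exp (- \<mu> * real (zrp_step n eta (fst p) (snd p) v)))" for p
  have mF: "F \<in> borel_measurable borel" and mF': "F' \<in> borel_measurable borel"
    unfolding F_def F'_def by measurable
  have mG: "G \<in> borel_measurable (unif01 \<Otimes>\<^sub>M unif01)"
    unfolding G_def by (rule measurable_zrp_step_unif01)
  have "AE w in zrp_drive. ennreal (exp (lam * Z - \<kappa> * J)) * (F (fst w) + F' (fst w) * G (snd w))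
      \<le> potential (zstep n v T (eta, J, Z) w)"
    using AE_drive_regular
  proof eventually_elim
    case (elim w)
    show ?case unfolding F_def F'_def G_def q_def m_def by (rule potential_zstep_empty_ge[OF adm Zc JT X elim])
  qed
  then have "(\<integral>\<^sup>+w. ennreal (exp (lam * Z - \<kappa> * J)) * (F (fst w) + F' (fst w) * G (snd w)) \<partial>zrp_drive)
      \<le> (\<integral>\<^sup>+w. potential (zstep n v T (eta, J, Z) w) \<partial>zrp_drive)"
    by (rule nn_integral_mono_AE)
  moreover have "(\<lambda>w. F (fst w) + F' (fst w) * G (snd w)) \<in> borel_measurable zrp_drive"
    using measurable_zrp_drive_mult[OF mF, of "\<lambda>_. 1"] measurable_zrp_drive_mult[OF mF' mG] by simp
  ultimately show ?thesis
    unfolding F_def[symmetric] F'_def[symmetric] G_def[symmetric]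
    by (simp add: nn_integral_cmult nn_integral_zrp_drive_add_mult[OF mF mF' mG])
qed

lemma exp_add_truncated_moment_ge_one:
  fixes q m g d I :: real
  assumes q: "0 < q" and I: "0 \<le> I" "exp ((g / q - 1) * (q * m)) = 1 + (g / q - 1) * I"
    and d: "d \<le> g"
  shows "1 \<le> exp (g * m) * exp (- (q * m)) + I * (1 - d / q)"
proof -
  have "exp (g * m) * exp (- (q * m)) = exp ((g / q - 1) * (q * m))"
    using q by (simp add: exp_add[symmetric] field_simps)
  then have "exp (g * m) * exp (- (q * m)) + I * (1 - d / q) = 1 + I * ((g - d) / q)"
    using I q by (simp add: field_simps)
  moreover have "0 \<le> I * ((g - d) / q)" using I q d by simp
  ultimately show ?thesis by simp
qed

lemma potential_zstep_empty:
  assumes adm: "admissible (eta, J, Z)" and Zc: "Z < c" and JT: "J < T" and X: "eta v = 0"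
  shows "potential (eta, J, Z) \<le> (\<integral>\<^sup>+w. potential (zstep n v T (eta, J, Z) w) \<partial>zrp_drive)"
proof -
  have conf: "zrp_conf n r eta" using adm by (simp add: admissible_def)
  define q where "q = real (card (occupied n eta))"
  have q1: "1 \<le> q" using card_occupied_pos[OF conf r1] by (simp add: q_def)
  define K where "K = exp (lam * Z - \<kappa> * J)"
  define m where "m = min (c - Z) (T - J)"
  have m0: "0 < m" using Zc JT by (simp add: m_def)
  define I where "I = integral {0..q * m} (\<lambda>x. exp (((lam - \<kappa>) / q - 1) * x))"
  have I0: "0 \<le> I" and I: "exp (((lam - \<kappa>) / q - 1) * (q * m)) = 1 + ((lam - \<kappa>) / q - 1) * I"
    unfolding I_def using q1 m0 by (simp_all add: integral_exp_mult)
  have IF': "(\<integral>\<^sup>+x. ennreal (exp ((lam - \<kappa>) / q * x)) * indicator {..<q * m} x \<partial>exp1) = ennreal I"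
    unfolding I_def using q1 m0 by (intro nn_integral_exp1_exp_lessThan) simp
  define A where "A = exp ((lam - \<kappa>) * m) * exp (- (q * m))"
  define B where "B = 1 - (1 - exp (- \<mu>)) / q"
  have IF: "(\<integral>\<^sup>+x. ennreal (exp ((lam - \<kappa>) * m)) * indicator {q * m..} x \<partial>exp1) = ennreal A"
    unfolding A_def using q1 m0
    by (subst nn_integral_cmult_indicator) (auto simp: emeasure_exp1_atLeast ennreal_mult)
  have B0: "0 \<le> B"
    using q1 mu_nonneg by (simp add: B_def field_simps) (smt (verit) exp_gt_zero)
  have "1 \<le> A + I * B"
    unfolding A_def B_def using q1 I0 I rate_gap by (intro exp_add_truncated_moment_ge_one) auto
  then have "potential (eta, J, Z) \<le> ennreal (K * (A + I * B))"
    using adm Zc JT X by (simp add: potential_def K_def ennreal_leI)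
  also have "\<dots> = ennreal K * (ennreal A + ennreal I * ennreal B)"
    using I0 B0 by (simp add: A_def K_def ennreal_mult ennreal_plus)
  also have "\<dots> \<le> ennreal K * (ennreal A + ennreal I *
      (\<integral>\<^sup>+p. ennreal (exp (- \<mu> * real (zrp_step n eta (fst p) (snd p) v))) \<partial>(unif01 \<Otimes>\<^sub>M unif01)))"
    using nn_integral_exp_zrp_step_empty[OF conf r1 n2 vn X mu_nonneg]
    by (intro mult_left_mono add_left_mono) (auto simp: B_def q_def)
  also have "\<dots> \<le> (\<integral>\<^sup>+w. potential (zstep n v T (eta, J, Z) w) \<partial>zrp_drive)"
  proof -
    have "ennreal K *
        ((\<integral>\<^sup>+x. ennreal (exp ((lam - \<kappa>) * m)) * indicator {q * m..} x \<partial>exp1)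
         + (\<integral>\<^sup>+x. ennreal (exp ((lam - \<kappa>) / q * x)) * indicator {..<q * m} x \<partial>exp1)
           * (\<integral>\<^sup>+p. ennreal (exp (- \<mu> * real (zrp_step n eta (fst p) (snd p) v))) \<partial>(unif01 \<Otimes>\<^sub>M unif01)))
      \<le> (\<integral>\<^sup>+w. potential (zstep n v T (eta, J, Z) w) \<partial>zrp_drive)"
      unfolding K_def q_def m_def by (rule nn_integral_potential_zstep_empty[OF adm Zc JT X])
    then show ?thesis unfolding IF IF' .
  qed
  finally show ?thesis .
qed

lemma potential_le_nn_integral_zstep:
  assumes "admissible s"
  shows "potential s \<le> (\<integral>\<^sup>+w. potential (zstep n v T s w) \<partial>zrp_drive)"
proof -
  obtain eta J Z where s: "s = (eta, J, Z)" by (cases s) auto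
  consider "c \<le> Z \<or> T \<le> J" | "Z < c" "J < T" "eta v = 0" | "Z < c" "J < T" "0 < eta v"
    by fastforce
  then show ?thesis
    using assms unfolding s
    by cases (simp_all add: potential_zstep_frozen potential_zstep_empty potential_zstep_occupied)
qed

lemma measurable_potential_zchain:
  "(\<lambda>\<omega>. potential (zchain n v T s \<omega> k)) \<in> borel_measurable zrp_space"
proof (rule measurable_zchain_fun)
  fix e
  have "(\<lambda>x::real \<times> real. potential (e, x)) \<in> borel_measurable (borel \<Otimes>\<^sub>M borel)"
    unfolding potential_def admissible_def fst_conv snd_conv by measurable
  then show "(\<lambda>x. potential (e, x)) \<in> borel_measurable borel" by (simp add: borel_prod)
qed

lemma potential_le_nn_integral_zchain:
  "potential s \<le> (\<integral>\<^sup>+\<omega>. potential (zchain n v T s \<omega> k) \<partial>zrp_space)"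
proof (induction k arbitrary: s)
  case 0
  then show ?case by (simp add: prob_space.emeasure_space_1[OF prob_space_zrp_space])
next
  case (Suc k)
  show ?case
  proof (cases "admissible s")
    case True
    have "potential s \<le> (\<integral>\<^sup>+w. potential (zstep n v T s w) \<partial>zrp_drive)"
      by (rule potential_le_nn_integral_zstep[OF True])
    also have "\<dots> \<le> (\<integral>\<^sup>+w. \<integral>\<^sup>+\<omega>. potential (zchain n v T (zstep n v T s w) \<omega> k) \<partial>zrp_space \<partial>zrp_drive)"
      by (intro nn_integral_mono Suc.IH)
    also have "\<dots> = (\<integral>\<^sup>+w. \<integral>\<^sup>+\<omega>. potential (zchain n v T s (case_nat w \<omega>) (Suc k)) \<partial>zrp_space \<partial>zrp_drive)"
      by simp
    also have "\<dots> = (\<integral>\<^sup>+\<omega>. potential (zchain n v T s \<omega> (Suc k)) \<partial>zrp_space)"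
      by (rule nn_integral_zrp_space_split[symmetric, OF measurable_potential_zchain])
    finally show ?thesis .
  qed (simp add: potential_def)
qed

definition exp_neg_time :: "zstate \<Rightarrow> ennreal" where
  "exp_neg_time s = ennreal (exp (- fst (snd s)))"

lemma measurable_exp_neg_time_zchain:
  "(\<lambda>\<omega>. exp_neg_time (zchain n v T s \<omega> k)) \<in> borel_measurable zrp_space"
proof (rule measurable_zchain_fun)
  fix e
  have "(\<lambda>x::real \<times> real. exp_neg_time (e, x)) \<in> borel_measurable (borel \<Otimes>\<^sub>M borel)"
    unfolding exp_neg_time_def fst_conv snd_conv by measurable
  then show "(\<lambda>x. exp_neg_time (e, x)) \<in> borel_measurable borel" by (simp add: borel_prod)
qed

lemma nn_integral_exp_neg_time_zstep:
  assumes "admissible s"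
  shows "(\<integral>\<^sup>+w. exp_neg_time (zstep n v T s w) \<partial>zrp_drive)
    \<le> ennreal (real n / (real n + 1)) * exp_neg_time s"
proof -
  obtain eta J Z where s: "s = (eta, J, Z)" by (cases s) auto
  have conf: "zrp_conf n r eta" using assms s by (simp add: admissible_def)
  define q where "q = real (card (occupied n eta))"
  have q: "0 < q" "q \<le> real n"
    using card_occupied_pos[OF conf r1] card_occupied_le[of n eta] by (auto simp: q_def)
  define F where "F x = ennreal (exp (- (1 / q) * x))" for x
  have mF: "F \<in> borel_measurable borel" unfolding F_def by measurable
  have one: "(\<lambda>_. 1::ennreal) \<in> borel_measurable (unif01 \<Otimes>\<^sub>M unif01)" by simp
  have "exp_neg_time (zstep n v T s w) = ennreal (exp (- J)) * (F (fst w) * 1)" for w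
    by (simp add: exp_neg_time_def s zstep_eq F_def q_def[symmetric] ennreal_mult[symmetric]
        exp_add[symmetric])
  then have "(\<integral>\<^sup>+w. exp_neg_time (zstep n v T s w) \<partial>zrp_drive)
      = (\<integral>\<^sup>+w. ennreal (exp (- J)) * (F (fst w) * 1) \<partial>zrp_drive)"
    by presburger
  also have "\<dots> = ennreal (exp (- J)) * ((\<integral>\<^sup>+x. F x \<partial>exp1) * (\<integral>\<^sup>+y. 1 \<partial>(unif01 \<Otimes>\<^sub>M unif01)))"
    by (simp only: nn_integral_cmult[OF measurable_zrp_drive_mult[OF mF one]]
        nn_integral_zrp_drive_mult[OF mF one])
  also have "\<dots> = ennreal (exp (- J)) * ennreal (q / (q + 1))"
  proof -
    have "(\<integral>\<^sup>+x. F x \<partial>exp1) = ennreal (1 / (1 + 1 / q))"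
      unfolding F_def using q by (intro nn_integral_exp1_exp_neg) (smt (verit) divide_pos_pos)
    also have "1 / (1 + 1 / q) = q / (q + 1)" using q by (simp add: field_simps)
    finally show ?thesis by (simp add: prob_space.emeasure_space_1[OF prob_space_unif01_pair])
  qed
  also have "\<dots> \<le> ennreal (exp (- J)) * ennreal (real n / (real n + 1))"
    using q by (intro mult_left_mono ennreal_leI) (auto simp: field_simps)
  finally show ?thesis by (simp add: exp_neg_time_def s mult.commute)
qed

lemma nn_integral_exp_neg_time_zchain:
  assumes "admissible s"
  shows "(\<integral>\<^sup>+\<omega>. exp_neg_time (zchain n v T s \<omega> k) \<partial>zrp_space)
    \<le> ennreal ((real n / (real n + 1)) ^ k) * exp_neg_time s"
  using assms
proof (induction k arbitrary: s)
  case 0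
  then show ?case by (simp add: prob_space.emeasure_space_1[OF prob_space_zrp_space])
next
  case (Suc k)
  let ?\<rho> = "real n / (real n + 1)"
  have "(\<integral>\<^sup>+\<omega>. exp_neg_time (zchain n v T s \<omega> (Suc k)) \<partial>zrp_space)
      = (\<integral>\<^sup>+w. \<integral>\<^sup>+\<omega>. exp_neg_time (zchain n v T s (case_nat w \<omega>) (Suc k)) \<partial>zrp_space \<partial>zrp_drive)"
    by (rule nn_integral_zrp_space_split[OF measurable_exp_neg_time_zchain])
  also have "\<dots> = (\<integral>\<^sup>+w. \<integral>\<^sup>+\<omega>. exp_neg_time (zchain n v T (zstep n v T s w) \<omega> k) \<partial>zrp_space \<partial>zrp_drive)"
    by simp
  also have "\<dots> \<le> (\<integral>\<^sup>+w. ennreal (?\<rho> ^ k) * exp_neg_time (zstep n v T s w) \<partial>zrp_drive)"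
  proof (rule nn_integral_mono_AE)
    obtain eta J Z where s: "s = (eta, J, Z)" by (cases s) auto
    show "AE w in zrp_drive. (\<integral>\<^sup>+\<omega>. exp_neg_time (zchain n v T (zstep n v T s w) \<omega> k) \<partial>zrp_space)
        \<le> ennreal (?\<rho> ^ k) * exp_neg_time (zstep n v T s w)"
      using AE_drive_regular by eventually_elim (use Suc admissible_zstep s in auto)
  qed
  also have "\<dots> = ennreal (?\<rho> ^ k) * (\<integral>\<^sup>+w. exp_neg_time (zstep n v T s w) \<partial>zrp_drive)"
  proof (rule nn_integral_cmult)
    have "(\<lambda>w. ennreal (exp (- fst (snd s) - fst w / real (card (occupied n (fst s))))) * 1)
        \<in> borel_measurable zrp_drive"
      by (rule measurable_zrp_drive_mult) simp_all
    then show "(\<lambda>w. exp_neg_time (zstep n v T s w)) \<in> borel_measurable zrp_drive"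
      by (simp add: exp_neg_time_def zstep_def Let_def)
  qed
  also have "\<dots> \<le> ennreal (?\<rho> ^ k) * (ennreal ?\<rho> * exp_neg_time s)"
    by (intro mult_left_mono nn_integral_exp_neg_time_zstep Suc.prems) auto
  also have "\<dots> = ennreal (?\<rho> ^ Suc k) * exp_neg_time s"
  proof -
    have "ennreal (?\<rho> ^ Suc k) = ennreal (?\<rho> ^ k) * ennreal ?\<rho>"
      by (subst power_Suc2, rule ennreal_mult) auto
    then show ?thesis by (simp only: mult.assoc)
  qed
  finally show ?case .
qed

text \<open>Once \<open>J \<ge> T\<close> the potential is at most \<open>exp (lam c - \<kappa> T)\<close>; before that, \<open>e\<^sup>T e\<^sup>-\<^sup>J \<ge> 1\<close>.\<close>

lemma potential_le:
  "potential s \<le> ennreal (exp (lam * c)) * indicator {s. c \<le> snd (snd s)} s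
    + ennreal (exp (lam * c + T)) * exp_neg_time s + ennreal (exp (lam * c - \<kappa> * T))"
proof -
  obtain eta J Z where s: "s = (eta, J, Z)" by (cases s) auto
  show ?thesis
  proof (cases "admissible s \<and> \<not> c \<le> Z \<and> \<not> T \<le> J")
    case True
    have "lam * Z \<le> lam * c" using True lam_nonneg by (intro mult_left_mono) auto
    moreover have "0 \<le> \<mu> * real (eta v)" "0 \<le> \<kappa> * J"
      using True mu_nonneg kappa_nonneg by (auto simp: s admissible_def)
    ultimately have "exp (lam * Z - \<mu> * real (eta v) - \<kappa> * J) \<le> exp (lam * c + T) * exp (- J)"
      using True by (simp add: exp_add[symmetric] s)
    then have "potential s \<le> ennreal (exp (lam * c + T)) * exp_neg_time s"
      using True by (simp add: s potential_def exp_neg_time_def ennreal_mult[symmetric] ennreal_leI)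
    then show ?thesis by (simp add: add_increasing2 order_trans[OF _ add_increasing])
  next
    case False
    then consider "\<not> admissible s" | "admissible s" "c \<le> Z" | "admissible s" "\<not> c \<le> Z" "T \<le> J"
      by blast
    then show ?thesis by cases (simp_all add: s potential_def)
  qed
qed

lemma exp_neg_le_prob_saturated:
  assumes conf: "zrp_conf n r eta0"
  shows "exp (- \<mu> * real (eta0 v)) \<le>
    exp (lam * c) * measure zrp_space {\<omega>. c \<le> snd (snd (zchain n v T (eta0, 0, 0) \<omega> k))}
    + exp (lam * c + T) * (real n / (real n + 1)) ^ k + exp (lam * c - \<kappa> * T)"
proof -
  let ?s = "\<lambda>\<omega>. zchain n v T (eta0, 0, 0) \<omega> k"
  let ?A = "{\<omega>. c \<le> snd (snd (?s \<omega>))}"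
  have adm: "admissible (eta0, 0, 0)" using conf by (simp add: admissible_def)
  have [measurable]: "(\<lambda>\<omega>. snd (snd (?s \<omega>))) \<in> borel_measurable zrp_space"
    using measurable_zchain by blast
  have "{\<omega> \<in> space zrp_space. c \<le> snd (snd (?s \<omega>))} \<in> sets zrp_space" by measurable
  then have A: "?A \<in> sets zrp_space" by (simp add: space_zrp_space)
  have mU: "(\<lambda>\<omega>. exp_neg_time (?s \<omega>)) \<in> borel_measurable zrp_space"
    by (rule measurable_exp_neg_time_zchain)
  have "ennreal (exp (- \<mu> * real (eta0 v))) = potential (eta0, 0, 0)"
    using adm c_pos T_pos by (simp add: potential_def)
  also have "\<dots> \<le> (\<integral>\<^sup>+\<omega>. potential (?s \<omega>) \<partial>zrp_space)"
    by (rule potential_le_nn_integral_zchain)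
  also have "\<dots> \<le> (\<integral>\<^sup>+\<omega>. ennreal (exp (lam * c)) * indicator ?A \<omega>
      + ennreal (exp (lam * c + T)) * exp_neg_time (?s \<omega>) + ennreal (exp (lam * c - \<kappa> * T)) \<partial>zrp_space)"
    using potential_le by (intro nn_integral_mono) (simp add: indicator_def)
  also have "\<dots> = ennreal (exp (lam * c)) * emeasure zrp_space ?A
      + ennreal (exp (lam * c + T)) * (\<integral>\<^sup>+\<omega>. exp_neg_time (?s \<omega>) \<partial>zrp_space)
      + ennreal (exp (lam * c - \<kappa> * T))"
    using A mU prob_space.emeasure_space_1[OF prob_space_zrp_space]
    by (simp add: nn_integral_add nn_integral_cmult nn_integral_cmult_indicator)
  also have "\<dots> \<le> ennreal (exp (lam * c)) * emeasure zrp_space ?A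
      + ennreal (exp (lam * c + T)) * ennreal ((real n / (real n + 1)) ^ k)
      + ennreal (exp (lam * c - \<kappa> * T))"
    using nn_integral_exp_neg_time_zchain[OF adm, of k]
    by (intro add_mono mult_left_mono order_refl) (auto simp: exp_neg_time_def)
  also have "\<dots> = ennreal (exp (lam * c) * measure zrp_space ?A
      + exp (lam * c + T) * (real n / (real n + 1)) ^ k + exp (lam * c - \<kappa> * T))"
    by (simp add: finite_measure.emeasure_eq_measure[OF prob_space.finite_measure[OF prob_space_zrp_space]] ennreal_mult[symmetric]
        ennreal_plus[symmetric] del: ennreal_plus)
  finally show ?thesis by (subst (asm) ennreal_le_iff) (auto intro!: add_nonneg_nonneg)
qed

end

lemma measurable_zrp_jump: "(\<lambda>\<omega>. zrp_jump n eta0 \<omega> k) \<in> borel_measurable zrp_space"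
  using measurable_zchain[of n 0 0 "(eta0, 0, 0)" k] by (simp add: zchain_zrp)

lemma measurable_zrp_chain_at: "(\<lambda>\<omega>. zrp_chain n eta0 \<omega> k v) \<in> zrp_space \<rightarrow>\<^sub>M count_space UNIV"
proof -
  have "(\<lambda>\<omega>. fst (zchain n 0 0 (eta0, 0, 0) \<omega> k)) \<in> zrp_space \<rightarrow>\<^sub>M count_space (reachable n eta0 k)"
    using measurable_zchain[of n 0 0 "(eta0, 0, 0)" k] by simp
  moreover have "(\<lambda>e. e v) \<in> count_space (reachable n eta0 k) \<rightarrow>\<^sub>M count_space (UNIV :: nat set)"
    by simp
  ultimately show ?thesis unfolding zchain_zrp by (rule measurable_compose)
qed

text \<open>Writing a cardinality as a series of indicators makes it measurable; infinite sets
  (cardinality \<open>0\<close>) go to \<open>\<infinity>\<close> and back to \<open>0\<close> through \<^const>\<open>enn2real\<close>.\<close>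

lemma card_eq_nat_floor_suminf_indicator:
  fixes S :: "nat set"
  shows "card S = nat \<lfloor>enn2real (\<Sum>k. indicator S k :: ennreal)\<rfloor>"
proof -
  have "(\<Sum>k. indicator S k :: ennreal) = emeasure (count_space UNIV) S"
    by (simp add: nn_integral_count_space_nat[symmetric])
  also have "\<dots> = (if finite S then of_nat (card S) else \<infinity>)" by (rule emeasure_count_space) simp
  finally show ?thesis by auto
qed

lemma measurable_zrp_jump_count:
  "(\<lambda>x. card {k. 1 \<le> k \<and> zrp_jump n eta0 (fst x) k \<le> snd x})
    \<in> (zrp_space \<Otimes>\<^sub>M lborel) \<rightarrow>\<^sub>M count_space UNIV"
proof -
  have [measurable]: "(\<lambda>x. zrp_jump n eta0 (fst x) k) \<in> borel_measurable (zrp_space \<Otimes>\<^sub>M lborel)" for k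
    using measurable_compose[OF measurable_fst[of zrp_space lborel] measurable_zrp_jump[of n eta0 k]]
    by (simp add: comp_def)
  have "(\<lambda>x. indicator {k. 1 \<le> k \<and> zrp_jump n eta0 (fst x) k \<le> snd x} k :: ennreal)
      \<in> borel_measurable (zrp_space \<Otimes>\<^sub>M lborel)" for k
    unfolding indicator_def by measurable
  then have "(\<lambda>x. \<Sum>k. indicator {k. 1 \<le> k \<and> zrp_jump n eta0 (fst x) k \<le> snd x} k :: ennreal)
      \<in> borel_measurable (zrp_space \<Otimes>\<^sub>M lborel)"
    by (rule borel_measurable_suminf_order)
  then show ?thesis by (subst card_eq_nat_floor_suminf_indicator) measurable
qed

lemma measurable_zrp_at:
  "(\<lambda>x. zrp n eta0 (snd x) (fst x) v) \<in> (zrp_space \<Otimes>\<^sub>M lborel) \<rightarrow>\<^sub>M count_space UNIV"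
proof -
  have "(\<lambda>x. (\<lambda>k x. zrp_chain n eta0 (fst x) k v) (card {k. 1 \<le> k \<and> zrp_jump n eta0 (fst x) k \<le> snd x}) x)
      \<in> (zrp_space \<Otimes>\<^sub>M lborel) \<rightarrow>\<^sub>M count_space UNIV"
  proof (rule measurable_compose_countable'[OF _ measurable_zrp_jump_count])
    fix k :: nat
    show "(\<lambda>x. zrp_chain n eta0 (fst x) k v) \<in> (zrp_space \<Otimes>\<^sub>M lborel) \<rightarrow>\<^sub>M count_space UNIV"
      using measurable_compose[OF measurable_fst[of zrp_space lborel] measurable_zrp_chain_at[of n eta0 k v]]
      by (simp add: comp_def)
  qed simp
  then show ?thesis by (simp add: zrp_def)
qed

lemma sets_zero_set: "{t \<in> {0..<T}. zrp n eta0 t \<omega> v = 0} \<in> sets lborel"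
proof -
  have "(\<lambda>t. zrp n eta0 t \<omega> v) \<in> lborel \<rightarrow>\<^sub>M count_space UNIV"
    using measurable_compose[OF measurable_Pair1'[of \<omega> zrp_space lborel] measurable_zrp_at]
    by (simp add: space_zrp_space comp_def)
  then have "{t \<in> space lborel. zrp n eta0 t \<omega> v = 0} \<inter> {0..<T} \<in> sets lborel" by measurable
  then show ?thesis by (simp add: Int_def conj_commute)
qed

lemma measurable_measure_zero_set:
  "(\<lambda>\<omega>. measure lborel {t \<in> {0..<T}. zrp n eta0 t \<omega> v = 0}) \<in> borel_measurable zrp_space"
proof -
  define Q where "Q = {x \<in> space (zrp_space \<Otimes>\<^sub>M lborel). snd x \<in> {0..<T} \<and> zrp n eta0 (snd x) (fst x) v = 0}"
  have [measurable]: "(\<lambda>x. zrp n eta0 (snd x) (fst x) v) \<in> (zrp_space \<Otimes>\<^sub>M lborel) \<rightarrow>\<^sub>M count_space UNIV"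
    by (rule measurable_zrp_at)
  have "Q \<in> sets (zrp_space \<Otimes>\<^sub>M lborel)" unfolding Q_def by measurable
  then have "(\<lambda>\<omega>. emeasure lborel (Pair \<omega> -` Q)) \<in> borel_measurable zrp_space"
    by (rule lborel.measurable_emeasure_Pair)
  moreover have "Pair \<omega> -` Q = {t \<in> {0..<T}. zrp n eta0 t \<omega> v = 0}" for \<omega>
    by (auto simp: Q_def space_pair_measure space_zrp_space)
  ultimately show ?thesis unfolding measure_def by simp
qed

context
  fixes n r v :: nat and T :: real and eta0 :: "nat \<Rightarrow> nat" and \<omega> :: "nat \<Rightarrow> real \<times> real \<times> real"
  assumes n2: "2 \<le> n" and r1: "1 \<le> r" and T_pos: "0 < T" and conf0: "zrp_conf n r eta0"
    and regular: "\<forall>j. drive_regular (\<omega> j)"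
begin

declare zchain.simps(2) [simp del]

abbreviation "conf_at k \<equiv> fst (zchain n v T (eta0, 0, 0) \<omega> k)"
abbreviation "jump_time k \<equiv> fst (snd (zchain n v T (eta0, 0, 0) \<omega> k))"
abbreviation "zero_time k \<equiv> snd (snd (zchain n v T (eta0, 0, 0) \<omega> k))"

lemma zchain_Suc_components:
  "conf_at (Suc k) = zrp_step n (conf_at k) (fst (snd (\<omega> k))) (snd (snd (\<omega> k)))"
  "jump_time (Suc k) = jump_time k + fst (\<omega> k) / real (card (occupied n (conf_at k)))"
  "zero_time (Suc k) = zero_time k +
     (if conf_at k v = 0 then max 0 (min (jump_time (Suc k)) T - jump_time k) else 0)"
  by (simp_all add: zchain_Suc zstep_def Let_def)

lemma zrp_conf_conf_at: "zrp_conf n r (conf_at k)"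
proof (induction k)
  case (Suc k)
  then show ?case using regular unfolding zchain_Suc_components(1)
    by (intro zrp_conf_step[OF _ r1 n2]) (auto simp: drive_regular_def less_imp_le)
qed (simp add: conf0)

lemma jump_time_less_Suc: "jump_time k < jump_time (Suc k)"
  using card_occupied_pos[OF zrp_conf_conf_at r1, of k] regular
  by (simp add: zchain_Suc_components(2) drive_regular_def)

lemma jump_time_mono: "i \<le> j \<Longrightarrow> jump_time i \<le> jump_time j"
  using lift_Suc_mono_le[of jump_time] jump_time_less_Suc by (meson less_imp_le)

lemma jump_time_nonneg: "0 \<le> jump_time k"
  using jump_time_mono[of 0 k] by simp

lemma zrp_eq_conf_at:
  assumes "jump_time k \<le> t" "t < jump_time (Suc k)"
  shows "zrp n eta0 t \<omega> = conf_at k"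
proof -
  have "{i. 1 \<le> i \<and> zrp_jump n eta0 \<omega> i \<le> t} = {1..k}"
  proof (intro set_eqI iffI)
    fix i assume "i \<in> {i. 1 \<le> i \<and> zrp_jump n eta0 \<omega> i \<le> t}"
    then have "1 \<le> i" "jump_time i \<le> t" by (auto simp: zchain_zrp)
    moreover have "i \<le> k"
      using jump_time_mono[of "Suc k" i] \<open>jump_time i \<le> t\<close> assms(2) by fastforce
    ultimately show "i \<in> {1..k}" by simp
  next
    fix i assume "i \<in> {1..k}"
    then show "i \<in> {i. 1 \<le> i \<and> zrp_jump n eta0 \<omega> i \<le> t}"
      using jump_time_mono[of i k] assms(1) by (auto simp: zchain_zrp)
  qed
  then show ?thesis by (simp add: zrp_def zchain_zrp)
qed

definition zero_interval :: "nat \<Rightarrow> real set" where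
  "zero_interval k = (if conf_at k v = 0 then {jump_time k..<min (jump_time (Suc k)) T} else {})"

lemma zero_interval_subset: "zero_interval k \<subseteq> {t \<in> {0..<T}. zrp n eta0 t \<omega> v = 0}"
  using jump_time_nonneg[of k] zrp_eq_conf_at[of k] by (auto simp: zero_interval_def)

lemma measure_zero_interval:
  "measure lborel (zero_interval k)
    = (if conf_at k v = 0 then max 0 (min (jump_time (Suc k)) T - jump_time k) else 0)"
  by (cases "jump_time k \<le> min (jump_time (Suc k)) T") (auto simp: zero_interval_def)

lemma measure_UN_zero_interval: "measure lborel (\<Union>j<k. zero_interval j) = zero_time k"
proof (induction k)
  case (Suc k)
  have fin: "emeasure lborel A \<noteq> \<infinity>" if "A \<subseteq> {0..<T}" for A
  proof -
    have "emeasure lborel A \<le> emeasure lborel {0..<T}" using that by (intro emeasure_mono) auto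
    also have "\<dots> = ennreal T" using T_pos by simp
    finally show ?thesis unfolding infinity_ennreal_def by (rule neq_top_trans[OF ennreal_neq_top])
  qed
  have "t < jump_time k" if "t \<in> zero_interval j" "j < k" for t j
    using that jump_time_mono[of "Suc j" k] by (auto simp: zero_interval_def split: if_splits)
  then have "(\<Union>j<k. zero_interval j) \<inter> zero_interval k = {}"
    by (fastforce simp: zero_interval_def split: if_splits)
  moreover have "(\<Union>j<k. zero_interval j) \<subseteq> {0..<T}" "zero_interval k \<subseteq> {0..<T}"
    using zero_interval_subset by blast+
  ultimately have "measure lborel ((\<Union>j<k. zero_interval j) \<union> zero_interval k)
      = measure lborel (\<Union>j<k. zero_interval j) + measure lborel (zero_interval k)"
    using fin by (intro measure_Union) (auto simp: zero_interval_def)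
  then show ?case
    using Suc by (simp add: lessThan_Suc Un_commute measure_zero_interval zchain_Suc_components(3))
qed simp

lemma zero_time_le_measure: "zero_time k \<le> measure lborel {t \<in> {0..<T}. zrp n eta0 t \<omega> v = 0}"
proof -
  have "emeasure lborel {t \<in> {0..<T}. zrp n eta0 t \<omega> v = 0} \<le> emeasure lborel {0..<T}"
    by (intro emeasure_mono) auto
  then have "{t \<in> {0..<T}. zrp n eta0 t \<omega> v = 0} \<in> fmeasurable lborel"
    using sets_zero_set T_pos by (intro fmeasurableI) (auto simp: less_top[symmetric] top_unique)
  moreover have "(\<Union>j<k. zero_interval j) \<subseteq> {t \<in> {0..<T}. zrp n eta0 t \<omega> v = 0}"
    using zero_interval_subset by blast
  moreover have "zero_interval j \<in> sets lborel" for j by (simp add: zero_interval_def)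
  then have "(\<Union>j<k. zero_interval j) \<in> sets lborel" by auto
  ultimately show ?thesis
    unfolding measure_UN_zero_interval[symmetric] by (intro measure_mono_fmeasurable)
qed

end

section \<open>The lower bound\<close>

lemma (in prob_space) mult_prob_le_expectation_min:
  assumes f: "f \<in> borel_measurable M" and A: "A \<in> events" and c: "0 \<le> c"
    and f_nonneg: "\<And>x. 0 \<le> f x" and AE: "AE x in M. x \<in> A \<longrightarrow> c \<le> f x"
  shows "c * prob A \<le> expectation (\<lambda>x. min (f x) c)"
proof -
  have ind: "integrable M (indicator A :: 'a \<Rightarrow> real)"
    using A by (intro integrable_real_indicator) (simp_all add: less_top[symmetric])
  then have "c * prob A = expectation (\<lambda>x. c * indicator A x)"
    using A by simp
  also have "\<dots> \<le> expectation (\<lambda>x. min (f x) c)"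
  proof (rule integral_mono_AE)
    show "integrable M (\<lambda>x. c * indicator A x)" using ind by simp
    show "integrable M (\<lambda>x. min (f x) c)"
      using f f_nonneg c by (intro integrable_const_bound[where B = c]) (auto simp: abs_le_iff)
    show "AE x in M. c * indicator A x \<le> min (f x) c"
      using AE by eventually_elim (auto simp: f_nonneg c indicator_def)
  qed
  finally show ?thesis .
qed

lemma zero_time_potential_scaled:
  fixes L :: real
  assumes "2 \<le> n" "1 \<le> r" "v < n" "1 \<le> L"
  shows "zero_time_potential n r v (L\<^sup>2) (24 / L) (6 / L) ((6 / L)\<^sup>2 / 2) (L / 24)"
proof
  show "2 \<le> n" "1 \<le> r" "v < n" by fact+
  show "0 < L\<^sup>2" "0 \<le> 24 / L" "0 \<le> 6 / L" "0 \<le> (6 / L)\<^sup>2 / 2" "0 < L / 24"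
    using assms(4) by auto
  show "(6 / L)\<^sup>2 / 2 \<le> exp (6 / L) + exp (- (6 / L)) - 2"
    using exp_lower_Taylor_quadratic[of "6 / L"] exp_ge_add_one_self[of "- (6 / L)"] assms(4) by simp
  have "(6 / L)\<^sup>2 / 2 = 18 / L * (1 / L)" by (simp add: power2_eq_square field_simps)
  also have "\<dots> \<le> 18 / L * 1" using assms(4) by (intro mult_left_mono) auto
  finally show "1 - exp (- (6 / L)) \<le> 24 / L - (6 / L)\<^sup>2 / 2"
    using exp_ge_add_one_self[of "- (6 / L)"] by simp
qed

text \<open>With these parameters \<open>lam c = 1\<close>, \<open>\<kappa> T = 18\<close> and
  \<open>\<mu> \<eta>\<^sub>0(v) \<le> 12\<close>; after enough jumps the term \<open>e\<^sup>1\<^sup>+\<^sup>T (n/(n+1))\<^sup>k\<close> is below \<open>e\<^sup>-\<^sup>1\<^sup>7\<close>.\<close>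

lemma prob_zero_time_ge:
  fixes L :: real
  assumes n2: "2 \<le> n" and r1: "1 \<le> r" and vn: "v < n" and conf: "zrp_conf n r eta0"
    and L: "1 \<le> L" and X: "real (eta0 v) \<le> 2 * L"
  obtains k where
    "exp (- 13) / 2 \<le> measure zrp_space {\<omega>. L / 24 \<le> snd (snd (zchain n v (L\<^sup>2) (eta0, 0, 0) \<omega> k))}"
proof -
  interpret zero_time_potential n r v "L\<^sup>2" "24 / L" "6 / L" "(6 / L)\<^sup>2 / 2" "L / 24"
    by (rule zero_time_potential_scaled[OF n2 r1 vn L])
  define \<rho> where "\<rho> = real n / (real n + 1)"
  obtain k where k: "\<rho> ^ k < exp (- 18 - L\<^sup>2)"
    using real_arch_pow_inv[of "exp (- 18 - L\<^sup>2)" \<rho>] by (auto simp: \<rho>_def)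
  define p where "p = measure zrp_space {\<omega>. L / 24 \<le> snd (snd (zchain n v (L\<^sup>2) (eta0, 0, 0) \<omega> k))}"
  have "exp (- 12) \<le> exp (- (6 / L) * real (eta0 v))"
    using X L by (simp add: field_simps)
  also have "\<dots> \<le> exp 1 * p + exp (1 + L\<^sup>2) * \<rho> ^ k + exp (- 17)"
    using exp_neg_le_prob_saturated[OF conf, of k] L
    by (simp add: p_def \<rho>_def power2_eq_square field_simps)
  also have "exp (1 + L\<^sup>2) * \<rho> ^ k \<le> exp (1 + L\<^sup>2) * exp (- 18 - L\<^sup>2)"
    using k by (intro mult_left_mono) auto
  also have "exp (1 + L\<^sup>2) * exp (- 18 - L\<^sup>2) = exp (- 17)"
    by (simp add: exp_add[symmetric])
  finally have "exp (- 12) - 2 * exp (- 17) \<le> exp 1 * p" by simp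
  moreover have "exp (- 12) / 2 \<le> exp (- 12) - 2 * exp (- 17 :: real)"
  proof -
    have "4 \<le> exp (5::real)" using exp_ge_add_one_self[of 5] by simp
    then have "4 * exp (- 17) \<le> exp 5 * exp (- 17::real)" by (intro mult_right_mono) auto
    then show ?thesis by (simp add: exp_add[symmetric])
  qed
  moreover have "exp (- 12) / 2 = exp 1 * (exp (- 13) / 2 :: real)"
    by (simp add: exp_add[symmetric])
  ultimately have "exp 1 * (exp (- 13) / 2) \<le> exp 1 * p" by linarith
  then have "exp (- 13) / 2 \<le> p" by simp
  then show ?thesis using that p_def by blast
qed

lemma expectation_min_zero_time_ge:
  assumes n2: "2 \<le> n" and r1: "1 \<le> r" and conf0: "zrp_conf n r eta0" and vn: "v < n"
    and X: "real (eta0 v) \<le> 2 * (real r / real n + 1)"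
  shows "exp (- 13) / 48 * (real r / real n + 1) \<le> integral\<^sup>L zrp_space (\<lambda>\<omega>.
    min (measure lborel {t \<in> {0..<(real r / real n + 1)\<^sup>2}. zrp n eta0 t \<omega> v = 0})
      (1 / 24 * (real r / real n + 1)))"
proof -
  define L where "L = real r / real n + 1"
  have L: "1 \<le> L" by (simp add: L_def)
  define Z where "Z \<omega> = measure lborel {t \<in> {0..<L\<^sup>2}. zrp n eta0 t \<omega> v = 0}" for \<omega>
  obtain k where k: "exp (- 13) / 2
      \<le> measure zrp_space {\<omega>. L / 24 \<le> snd (snd (zchain n v (L\<^sup>2) (eta0, 0, 0) \<omega> k))}"
    using prob_zero_time_ge[OF n2 r1 vn conf0 L] X unfolding L_def by blast
  have "exp (- 13) / 48 * L = L / 24 * (exp (- 13) / 2)" by simp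
  also have "\<dots> \<le> L / 24 * measure zrp_space {\<omega>. L / 24 \<le> snd (snd (zchain n v (L\<^sup>2) (eta0, 0, 0) \<omega> k))}"
    using k L by (intro mult_left_mono) auto
  also have "\<dots> \<le> integral\<^sup>L zrp_space (\<lambda>\<omega>. min (Z \<omega>) (L / 24))"
  proof (rule prob_space.mult_prob_le_expectation_min[OF prob_space_zrp_space])
    show "Z \<in> borel_measurable zrp_space" unfolding Z_def by (rule measurable_measure_zero_set)
    have [measurable]: "(\<lambda>\<omega>. snd (snd (zchain n v (L\<^sup>2) (eta0, 0, 0) \<omega> k))) \<in> borel_measurable zrp_space"
      using measurable_zchain by blast
    have "{\<omega> \<in> space zrp_space. L / 24 \<le> snd (snd (zchain n v (L\<^sup>2) (eta0, 0, 0) \<omega> k))} \<in> sets zrp_space"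
      by measurable
    then show "{\<omega>. L / 24 \<le> snd (snd (zchain n v (L\<^sup>2) (eta0, 0, 0) \<omega> k))} \<in> sets zrp_space"
      by (simp add: space_zrp_space)
    show "AE \<omega> in zrp_space. \<omega> \<in> {\<omega>. L / 24 \<le> snd (snd (zchain n v (L\<^sup>2) (eta0, 0, 0) \<omega> k))}
        \<longrightarrow> L / 24 \<le> Z \<omega>"
      using AE_zrp_space_regular
    proof eventually_elim
      case (elim \<omega>)
      have "0 < L\<^sup>2" using L by simp
      from zero_time_le_measure[OF n2 r1 this conf0 elim, of v k] show ?case by (auto simp: Z_def)
    qed
  qed (use L in \<open>auto simp: Z_def\<close>)
  finally show ?thesis by (simp add: L_def Z_def)
qed

theorem lemma6:
  "\<exists>C::real > 0. \<exists>M::real > 0. \<forall>(n::nat) (r::nat) (eta0::nat \<Rightarrow> nat) (v::nat).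
     2 \<le> n \<longrightarrow> 1 \<le> r \<longrightarrow>
     (\<forall>i. n \<le> i \<longrightarrow> eta0 i = 0) \<longrightarrow> (\<Sum>i<n. eta0 i) = r \<longrightarrow>
     v < n \<longrightarrow> real (eta0 v) \<le> 2 * (real r / real n + 1) \<longrightarrow>
     (let \<rho> = real r / real n;
          Z = (\<lambda>\<omega>. measure lborel {t \<in> {0..<(\<rho> + 1)\<^sup>2}. zrp n eta0 t \<omega> v = 0})
      in C * (\<rho> + 1) \<le> integral\<^sup>L zrp_space (\<lambda>\<omega>. min (Z \<omega>) (M * (\<rho> + 1))))"
  by (rule exI[of _ "exp (- 13) / 48"], rule conjI, simp, rule exI[of _ "1 / 24"], rule conjI, simp,
      unfold Let_def, intro allI impI, rule expectation_min_zero_time_ge)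
    (simp_all add: zrp_conf_def)

end
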